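(* Let $a\in\mathbb{R}_{<0}$ and let $(a_1,a_2)$ satisfy one of: $a_1=0$, $a_2\in\mathbb{R}_{<0}$; or $a_1=-1-x+iy$, $a_2=x+iy$ with $-1\le x<0$, $y\in\mathbb{R}_{>0}$; or $-1<a_1,a_2<0$. Let $V$ be the Hilbert tensor product of $N(a_1,a_2)$ and $N(a,0)$ (described in the context). If a simple highest weight module $N(\lambda,0)$, of highest weight $\lambda$, is a Hilbert submodule of $V$, then $\lambda=a_1+a-a_2+2n_0$ for some integer $n_0$. Conversely: (1) if $a_1=0$, then for $n_0\in\mathbb{Z}$ the module $N(a-a_2+2n_0,0)$ is a Hilbert submodule of $V$ if and only if $0\le 2n_0<-1-a+a_2$; (2) if $a_1\neq0$, then for $n_0\in\mathbb{Z}$ the module $N(a_1+a-a_2+2n_0,0)$ is a Hilbert submodule of $V$ if and only if $2n_0<-1-a-a_1+a_2$.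
   Context: $\mathfrak{sl}(2,\mathbb{C})$ has basis $H,E,F$ with $[H,E]=2E$, $[H,F]=-2F$, $[E,F]=H$. For $(c_1,c_2)\in\mathbb{C}^2$ let $\mathcal{K}(c_1,c_2)$ be the set of $k\in\mathbb{Z}$ such that for each $i$ with $c_i\in\mathbb{Z}$ one has ($c_i+(-1)^{i-1}k<0$ iff $c_i<0$). $N(c_1,c_2)$ has basis $\{x(k):k\in\mathcal{K}(c_1,c_2)\}$ ($x(k):=0$ otherwise), $H x(k)=(c_1-c_2+2k)x(k)$, and: (I) neither $c_i$ a negative integer: $E x(k)=(c_2-k)x(k+1)$, $F x(k)=(c_1+k)x(k-1)$; (II) only $c_2$ a negative integer: $E x(k)=x(k+1)$, $F x(k)=(c_1+k)(c_2-k+1)x(k-1)$; (III) only $c_1$ a negative integer: $E x(k)=(c_1+k+1)(c_2-k)x(k+1)$, $F x(k)=x(k-1)$; (IV) both: $E x(k)=(c_1+k+1)x(k+1)$, $F x(k)=(c_2-k+1)x(k-1)$. Hilbert structures: on $N(a_1,a_2)$ the $x(k)$ are orthogonal, $\|x(0)\|=1$, and for $k>0$: if $a_2$ is not a negative integer, $\|x(k)\|^2=\prod_{j=1}^k\frac{j+a_1}{j-1-\bar a_2}$ and (when $a_1\neq0$) $\|x(-k)\|^2=\prod_{j=1}^k\frac{j+\bar a_2}{j-1-a_1}$; if $a_1=0$ and $a_2\in\mathbb{Z}_{<0}$, $\|x(k)\|^2=k!\prod_{j=1}^k(j-1-a_2)$. On $N(a,0)$ put $y(l)=x(-l)$, $l\in\mathbb{Z}_{\ge0}$,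 orthogonal with $\|y(0)\|=1$ and $\|y(l)\|^2=l!/\prod_{j=1}^l(j-1-a)$ if $a\notin\mathbb{Z}$, $\|y(l)\|^2=l!\prod_{j=1}^l(j-1-a)$ if $a\in\mathbb{Z}$. With $z(k,l)=x(k)\otimes y(l)$, $V=\{\sum u_{k,l}z(k,l):\sum|u_{k,l}|^2\|x(k)\|^2\|y(l)\|^2<\infty\}$. $H,E,F$ act on formal sums $\sum u_{k,l}z(k,l)$ termwise via $X(v\otimes w)=Xv\otimes w+v\otimes Xw$ (each coefficient of the result is a finite sum). A $\mathfrak{sl}(2,\mathbb{C})$-module $M$ is a Hilbert submodule of $V$ if there is an injective module homomorphism from $M$ into the module of such formal sums with image contained in $V$. *)

theory Defs
  imports "HOL-Analysis.Analysis"
begin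

definition negint :: "complex \<Rightarrow> bool" where
  "negint c \<longleftrightarrow> (\<exists>n::int. n < 0 \<and> c = of_int n)"

definition Kset :: "complex \<Rightarrow> complex \<Rightarrow> int set" where
  "Kset c1 c2 = {k. (\<forall>n::int. c1 = of_int n \<longrightarrow> (n + k < 0 \<longleftrightarrow> n < 0))
                  \<and> (\<forall>n::int. c2 = of_int n \<longrightarrow> (n - k < 0 \<longleftrightarrow> n < 0))}"

text \<open>Coefficients: E x(k) = eE c1 c2 k * x(k+1), F x(k) = eF c1 c2 k * x(k-1),
  H x(k) = hw c1 c2 k * x(k), following cases (I)-(IV).\<close>
definition eE :: "complex \<Rightarrow> complex \<Rightarrow> int \<Rightarrow> complex" where
  "eE c1 c2 k =
    (if \<not> negint c1 \<and> \<not> negint c2 then c2 - of_int k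
     else if \<not> negint c1 \<and> negint c2 then 1
     else if negint c1 \<and> \<not> negint c2 then (c1 + of_int k + 1) * (c2 - of_int k)
     else c1 + of_int k + 1)"

definition eF :: "complex \<Rightarrow> complex \<Rightarrow> int \<Rightarrow> complex" where
  "eF c1 c2 k =
    (if \<not> negint c1 \<and> \<not> negint c2 then c1 + of_int k
     else if \<not> negint c1 \<and> negint c2 then (c1 + of_int k) * (c2 - of_int k + 1)
     else if negint c1 \<and> \<not> negint c2 then 1
     else c2 - of_int k + 1)"

definition hw :: "complex \<Rightarrow> complex \<Rightarrow> int \<Rightarrow> complex" where
  "hw c1 c2 k = c1 - c2 + 2 * of_int k"

text \<open>Elements of N(c1,c2): finitely supported coefficient functions on K(c1,c2)
  (v k is the coefficient of x(k)).\<close>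
definition Nel :: "complex \<Rightarrow> complex \<Rightarrow> (int \<Rightarrow> complex) set" where
  "Nel c1 c2 = {v. finite {k. v k \<noteq> 0} \<and> (\<forall>k. k \<notin> Kset c1 c2 \<longrightarrow> v k = 0)}"

definition actE :: "complex \<Rightarrow> complex \<Rightarrow> (int \<Rightarrow> complex) \<Rightarrow> int \<Rightarrow> complex" where
  "actE c1 c2 v k = (if k \<in> Kset c1 c2 then eE c1 c2 (k - 1) * v (k - 1) else 0)"

definition actF :: "complex \<Rightarrow> complex \<Rightarrow> (int \<Rightarrow> complex) \<Rightarrow> int \<Rightarrow> complex" where
  "actF c1 c2 v k = (if k \<in> Kset c1 c2 then eF c1 c2 (k + 1) * v (k + 1) else 0)"

definition actH :: "complex \<Rightarrow> complex \<Rightarrow> (int \<Rightarrow> complex) \<Rightarrow> int \<Rightarrow> complex" where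
  "actH c1 c2 v k = (if k \<in> Kset c1 c2 then hw c1 c2 k * v k else 0)"

text \<open>Formal sums \<Sum> u(k,m) x(k) \<otimes> x(m) in N(a1,a2) \<otimes> N(a,0); here x(m) = y(-m),
  i.e. u(k,m) is the coefficient of z(k,-m).\<close>
definition FS :: "complex \<Rightarrow> complex \<Rightarrow> real \<Rightarrow> (int \<times> int \<Rightarrow> complex) set" where
  "FS a1 a2 a = {u. \<forall>k m. (k \<notin> Kset a1 a2 \<or> m \<notin> Kset (of_real a) 0) \<longrightarrow> u (k, m) = 0}"

definition tE :: "complex \<Rightarrow> complex \<Rightarrow> real \<Rightarrow> (int \<times> int \<Rightarrow> complex) \<Rightarrow> int \<times> int \<Rightarrow> complex" where
  "tE a1 a2 a u = (\<lambda>(k, m). actE a1 a2 (\<lambda>j. u (j, m)) k + actE (of_real a) 0 (\<lambda>j. u (k, j)) m)"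

definition tF :: "complex \<Rightarrow> complex \<Rightarrow> real \<Rightarrow> (int \<times> int \<Rightarrow> complex) \<Rightarrow> int \<times> int \<Rightarrow> complex" where
  "tF a1 a2 a u = (\<lambda>(k, m). actF a1 a2 (\<lambda>j. u (j, m)) k + actF (of_real a) 0 (\<lambda>j. u (k, j)) m)"

definition tH :: "complex \<Rightarrow> complex \<Rightarrow> real \<Rightarrow> (int \<times> int \<Rightarrow> complex) \<Rightarrow> int \<times> int \<Rightarrow> complex" where
  "tH a1 a2 a u = (\<lambda>(k, m). actH a1 a2 (\<lambda>j. u (j, m)) k + actH (of_real a) 0 (\<lambda>j. u (k, j)) m)"

definition xnorm2 :: "complex \<Rightarrow> complex \<Rightarrow> int \<Rightarrow> complex" where
  "xnorm2 a1 a2 k =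
    (if k = 0 then 1
     else if k > 0 then
       (if \<not> negint a2 then (\<Prod>j\<in>{1..nat k}. (of_nat j + a1) / (of_nat j - 1 - cnj a2))
        else if a1 = 0 then of_nat (fact (nat k)) * (\<Prod>j\<in>{1..nat k}. (of_nat j - 1 - a2))
        else 0)
     else (\<Prod>j\<in>{1..nat (- k)}. (of_nat j + cnj a2) / (of_nat j - 1 - a1)))"

text \<open>Squared norms ||y(l)||^2 on N(a,0), y(l) = x(-l).\<close>
definition ynorm2 :: "real \<Rightarrow> nat \<Rightarrow> real" where
  "ynorm2 a l =
    (if a \<notin> \<int> then fact l / (\<Prod>j\<in>{1..l}. (real j - 1 - a))
     else fact l * (\<Prod>j\<in>{1..l}. (real j - 1 - a)))"

definition inV :: "complex \<Rightarrow> complex \<Rightarrow> real \<Rightarrow> (int \<times> int \<Rightarrow> complex) \<Rightarrow> bool" where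
  "inV a1 a2 a u \<longleftrightarrow> u \<in> FS a1 a2 a \<and>
     ((\<lambda>(k, m). (cmod (u (k, m)))\<^sup>2 * Re (xnorm2 a1 a2 k) * ynorm2 a (nat (- m))) summable_on UNIV)"

definition hilb_sub :: "complex \<Rightarrow> complex \<Rightarrow> complex \<Rightarrow> real \<Rightarrow> bool" where
  "hilb_sub lam a1 a2 a \<longleftrightarrow> (\<exists>\<phi> :: (int \<Rightarrow> complex) \<Rightarrow> (int \<times> int \<Rightarrow> complex).
     (\<forall>v\<in>Nel lam 0. \<forall>w\<in>Nel lam 0. \<phi> (\<lambda>k. v k + w k) = (\<lambda>p. \<phi> v p + \<phi> w p)) \<and>
     (\<forall>c. \<forall>v\<in>Nel lam 0. \<phi> (\<lambda>k. c * v k) = (\<lambda>p. c * \<phi> v p)) \<and>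
     (\<forall>v\<in>Nel lam 0. \<phi> (actE lam 0 v) = tE a1 a2 a (\<phi> v)) \<and>
     (\<forall>v\<in>Nel lam 0. \<phi> (actF lam 0 v) = tF a1 a2 a (\<phi> v)) \<and>
     (\<forall>v\<in>Nel lam 0. \<phi> (actH lam 0 v) = tH a1 a2 a (\<phi> v)) \<and>
     inj_on \<phi> (Nel lam 0) \<and>
     (\<forall>v\<in>Nel lam 0. \<phi> v \<in> FS a1 a2 a \<and> inV a1 a2 a (\<phi> v)))"

end

theory Submission
  imports Defs
begin

text \<open>
  An embedding of \<open>N(\<lambda>,0)\<close> is determined by the image \<open>w\<close> of its highest weight vector: \<open>E w = 0\<close>
  and \<open>H w = \<lambda> w\<close>. As \<open>H\<close> acts on \<open>z(k,l)\<close> by \<open>a\<^sub>1 - a\<^sub>2 + a + 2(k - l)\<close>, the vector \<open>w\<close> lives on one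
  antidiagonal \<open>k - l = n\<^sub>0\<close>, which gives the form of \<open>\<lambda>\<close>, and \<open>E w = 0\<close> is a two term recursion
  along it, so \<open>w\<close> is unique up to a scalar. Its squared norm is a constant times
  \<open>\<Sum>\<^sub>j (n\<^sub>0 - a\<^sub>2)\<^sub>j (n\<^sub>0 + 1 + a\<^sub>1)\<^sub>j / (j! (-a)\<^sub>j)\<close>, whose terms grow like \<open>j\<^bsup>2n\<^sub>0+a\<^sub>1-a\<^sub>2+a\<^esup>\<close> by the
  Gamma function asymptotics of Pochhammer symbols; together with \<open>n\<^sub>0 \<in> K(a\<^sub>1,a\<^sub>2)\<close> this is the
  condition of the theorem.

  Conversely the vectors \<open>F\<^sup>n w\<close> span a copy of \<open>N(\<lambda>,0)\<close>, and they stay in \<open>V\<close>: the adjointness of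
  \<open>E\<close> and \<open>-F\<close> for the norms of both factors yields an identity expressing the partial sums of
  \<open>\<parallel>F u\<parallel>\<^sup>2\<close>, for \<open>u\<close> on an antidiagonal, through those of \<open>\<parallel>u\<parallel>\<^sup>2\<close> and \<open>\<parallel>E u\<parallel>\<^sup>2\<close> plus a boundary
  term, which is bounded along a subsequence because \<open>\<parallel>u\<parallel>\<^sup>2\<close> is summable.
\<close>

section \<open>Growth of series\<close>

lemma norm_pochhammer_asymptotic:
  fixes z :: complex
  assumes "z \<notin> \<int>\<^sub>\<le>\<^sub>0"
  shows "(\<lambda>n. cmod (pochhammer z n) / (fact n * real n powr (Re z - 1))) \<longlonglongrightarrow> cmod (rGamma z)"
proof -
  have lim: "(\<lambda>n. cmod (rGamma_series z n) / cmod (z / of_nat n + 1))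
      \<longlonglongrightarrow> cmod (rGamma z) / cmod (0 + 1)"
    by (intro tendsto_intros rGamma_series_LIMSEQ lim_const_over_n) simp
  have "eventually (\<lambda>n. cmod (rGamma_series z n) / cmod (z / of_nat n + 1) =
      cmod (pochhammer z n) / (fact n * real n powr (Re z - 1))) sequentially"
    using eventually_gt_at_top[of "0::nat"]
  proof eventually_elim
    case (elim n)
    then have n: "real n > 0"
      by simp
    have zn: "z + of_nat n \<noteq> 0"
    proof
      assume "z + of_nat n = 0"
      then have "z = - of_nat n"
        by (simp add: eq_neg_iff_add_eq_0)
      with assms show False
        by auto
    qed
    have "cmod (exp (z * of_real (ln (real n)))) = real n powr Re z"
      using n by (simp add: powr_def)
    then have series: "cmod (rGamma_series z n) =
        cmod (pochhammer z n) * cmod (z + of_nat n) / (fact n * real n powr Re z)"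
      unfolding rGamma_series_def by (simp add: pochhammer_Suc norm_mult norm_divide)
    have shift: "cmod (z / of_nat n + 1) = cmod (z + of_nat n) / real n"
    proof -
      have "z / of_nat n + 1 = (z + of_nat n) / of_nat n"
        using n by (simp add: field_simps)
      then show ?thesis
        by (simp add: norm_divide)
    qed
    have powr: "real n powr (Re z - 1) = real n powr Re z / real n"
      using n by (simp add: powr_diff)
    show ?case
      unfolding series shift powr using n zn by (simp add: field_simps)
  qed
  with lim show ?thesis
    using Lim_transform_eventually by fastforce
qed

lemma summable_iff_asymptotic_powr:
  fixes t :: "nat \<Rightarrow> real"
  assumes nonneg: "\<And>j. t j \<ge> 0" and lim: "(\<lambda>j. t j / real j powr e) \<longlonglongrightarrow> L" and L: "L > 0"
  shows "summable t \<longleftrightarrow> e < -1"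
proof -
  have "eventually (\<lambda>j. t j / real j powr e < 2 * L) sequentially"
    using lim L by (intro order_tendstoD) auto
  then have upper: "eventually (\<lambda>j. norm (t j) \<le> 2 * L * real j powr e) sequentially"
    using eventually_gt_at_top[of "0::nat"]
  proof eventually_elim
    case (elim j)
    then show ?case
      using nonneg[of j] by (simp add: field_simps)
  qed
  have "eventually (\<lambda>j. t j / real j powr e > L / 2) sequentially"
    using lim L by (intro order_tendstoD) auto
  then have lower: "eventually (\<lambda>j. norm (L / 2 * real j powr e) \<le> t j) sequentially"
    using eventually_gt_at_top[of "0::nat"]
  proof eventually_elim
    case (elim j)
    then show ?case
      using L by (simp add: field_simps abs_mult)
  qed
  show ?thesis
  proof
    assume "summable t"
    then have "summable (\<lambda>j. L / 2 * real j powr e)"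
      by (rule summable_comparison_test_ev[OF lower])
    then show "e < -1"
      using L summable_real_powr_iff by simp
  next
    assume "e < -1"
    then have "summable (\<lambda>j. 2 * L * real j powr e)"
      using summable_real_powr_iff by simp
    then show "summable t"
      by (rule summable_comparison_test_ev[OF upper])
  qed
qed

lemma summable_pochhammer_quotient_iff:
  fixes z1 z2 :: complex and x C :: real
  assumes z1: "z1 \<notin> \<int>\<^sub>\<le>\<^sub>0" and z2: "z2 \<notin> \<int>\<^sub>\<le>\<^sub>0" and "x > 0" "C > 0"
  shows "summable (\<lambda>j. C * cmod (pochhammer z1 j) * cmod (pochhammer z2 j) / (fact j * pochhammer x j))
    \<longleftrightarrow> Re z1 + Re z2 < x"
proof -
  define t where "t = (\<lambda>j. C * cmod (pochhammer z1 j) * cmod (pochhammer z2 j) / (fact j * pochhammer x j))"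
  have zx: "complex_of_real x \<notin> \<int>\<^sub>\<le>\<^sub>0"
    using \<open>x > 0\<close> by (auto elim!: nonpos_Ints_cases simp: complex_eq_iff)
  then have rGamma_x: "rGamma (complex_of_real x) \<noteq> 0"
    by (simp add: rGamma_eq_zero_iff)
  let ?q = "\<lambda>z n. cmod (pochhammer z n) / (fact n * real n powr (Re z - 1))"
  have "(\<lambda>n. C * ?q z1 n * ?q z2 n / ?q (complex_of_real x) n)
      \<longlonglongrightarrow> C * cmod (rGamma z1) * cmod (rGamma z2) / cmod (rGamma (complex_of_real x))"
    using rGamma_x by (intro tendsto_intros norm_pochhammer_asymptotic z1 z2 zx) auto
  moreover have "eventually (\<lambda>n. C * ?q z1 n * ?q z2 n / ?q (complex_of_real x) n
      = t n / real n powr (Re z1 + Re z2 - x - 1)) sequentially"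
    using eventually_gt_at_top[of "0::nat"]
  proof eventually_elim
    case (elim n)
    have px: "pochhammer x n > 0"
      using \<open>x > 0\<close> by (rule pochhammer_pos)
    then have "cmod (pochhammer (complex_of_real x) n) = pochhammer x n"
      by (simp add: pochhammer_of_real)
    moreover have "real n powr (Re z1 + Re z2 - x - 1) =
        real n powr (Re z1 - 1) * real n powr (Re z2 - 1) / real n powr (x - 1)"
      using elim by (simp add: powr_add[symmetric] powr_diff[symmetric] algebra_simps)
    ultimately show ?case
      using px elim by (simp add: t_def field_simps)
  qed
  ultimately have lim: "(\<lambda>j. t j / real j powr (Re z1 + Re z2 - x - 1))
      \<longlonglongrightarrow> C * cmod (rGamma z1) * cmod (rGamma z2) / cmod (rGamma (complex_of_real x))"
    using Lim_transform_eventually by fastforce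
  have nonneg: "t j \<ge> 0" for j
    using \<open>C > 0\<close> pochhammer_pos[OF \<open>x > 0\<close>, of j] by (simp add: t_def)
  have "C * cmod (rGamma z1) * cmod (rGamma z2) / cmod (rGamma (complex_of_real x)) > 0"
    using \<open>C > 0\<close> rGamma_x z1 z2 by (simp add: rGamma_eq_zero_iff)
  then have "summable t \<longleftrightarrow> Re z1 + Re z2 - x - 1 < -1"
    by (rule summable_iff_asymptotic_powr[OF nonneg lim])
  also have "Re z1 + Re z2 - x - 1 < -1 \<longleftrightarrow> Re z1 + Re z2 < x"
    by linarith
  finally show ?thesis
    unfolding t_def .
qed

lemma summable_frequently_mult_le_1:
  fixes T :: "nat \<Rightarrow> real"
  assumes "summable T"
  shows "\<exists>J\<ge>N. real J * T J \<le> 1"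
proof (rule ccontr)
  assume "\<not> ?thesis"
  then have *: "J \<ge> N \<Longrightarrow> real J * T J > 1" for J
    by force
  have "eventually (\<lambda>J. norm (inverse (real J)) \<le> T J) sequentially"
    using eventually_ge_at_top[of N]
  proof eventually_elim
    case (elim J)
    with * have "real J * T J > 1"
      by blast
    moreover from this have "J > 0"
      by (cases "J = 0") auto
    ultimately show ?case
      by (simp add: field_simps)
  qed
  then have "summable (\<lambda>J. inverse (real J))"
    using assms by (rule summable_comparison_test_ev)
  with not_summable_harmonic show False
    by blast
qed

text \<open>The boundary term \<open>g J * T J\<close> is bounded along the indices with \<open>J * T J \<le> 1\<close>, which are
  unbounded as \<open>T\<close> is summable and the harmonic series is not.\<close>

lemma summable_if_partial_sums_bounded_by:
  fixes S TE T g :: "nat \<Rightarrow> real" and \<mu> c1 c0 :: real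
  assumes nonneg: "\<And>j. S j \<ge> 0" "\<And>j. TE j \<ge> 0" "\<And>j. T j \<ge> 0"
    and summable: "summable TE" "summable T"
    and partial_sums: "\<And>J. (\<Sum>j<Suc J. S j) = (\<Sum>j<J. TE j) + g J * T J - \<mu> * (\<Sum>j<J. T j)"
    and g_linear: "\<And>J. \<bar>g J\<bar> \<le> c1 * real J + c0" and "c1 \<ge> 0" "c0 \<ge> 0"
  shows "summable S"
proof -
  define M where "M = suminf TE + \<bar>\<mu>\<bar> * suminf T + c1 + c0 * suminf T"
  have bound: "(\<Sum>j<Suc J. S j) \<le> M" if "real J * T J \<le> 1" for J
  proof -
    have TE_bound: "(\<Sum>j<J. TE j) \<le> suminf TE"
      using summable nonneg by (intro sum_le_suminf) auto
    have T_bound: "(\<Sum>j<J. T j) \<le> suminf T"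
      using summable nonneg by (intro sum_le_suminf) auto
    have T_nonneg: "0 \<le> (\<Sum>j<J. T j)"
      using nonneg by (intro sum_nonneg) auto
    have "T J \<le> suminf T"
      using sum_le_suminf[OF summable(2), of "{J}"] nonneg by simp
    have "g J * T J \<le> \<bar>g J\<bar> * T J"
      using nonneg(3)[of J] by (simp add: mult_right_mono)
    also have "\<dots> \<le> (c1 * real J + c0) * T J"
      using g_linear[of J] nonneg(3)[of J] by (rule mult_right_mono)
    also have "\<dots> = c1 * (real J * T J) + c0 * T J"
      by (simp add: algebra_simps)
    also have "\<dots> \<le> c1 * 1 + c0 * suminf T"
      using that \<open>T J \<le> suminf T\<close> \<open>c1 \<ge> 0\<close> \<open>c0 \<ge> 0\<close> by (intro add_mono mult_left_mono) auto
    finally have boundary: "g J * T J \<le> c1 + c0 * suminf T"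
      by simp
    have "- \<mu> * (\<Sum>j<J. T j) \<le> \<bar>\<mu>\<bar> * (\<Sum>j<J. T j)"
      using T_nonneg by (intro mult_right_mono) auto
    also have "\<dots> \<le> \<bar>\<mu>\<bar> * suminf T"
      using T_bound by (simp add: mult_left_mono)
    finally show ?thesis
      unfolding partial_sums M_def using TE_bound boundary by linarith
  qed
  show ?thesis
  proof (rule bounded_imp_summable[OF nonneg(1)])
    fix n
    obtain J where J: "J \<ge> n" "real J * T J \<le> 1"
      using summable_frequently_mult_le_1[OF summable(2)] by blast
    have "(\<Sum>k\<le>n. S k) = (\<Sum>k<Suc n. S k)"
      by (simp add: lessThan_Suc_atMost)
    also have "\<dots> \<le> (\<Sum>k<Suc J. S k)"
      using J(1) nonneg by (intro sum_mono2) auto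
    also have "\<dots> \<le> M"
      using bound[OF J(2)] .
    finally show "(\<Sum>k\<le>n. S k) \<le> M" .
  qed
qed

lemma norm_sum_sq_disjoint:
  fixes f :: "'i \<Rightarrow> complex"
  assumes "finite S" "\<And>i j. i \<in> S \<Longrightarrow> j \<in> S \<Longrightarrow> i \<noteq> j \<Longrightarrow> f i = 0 \<or> f j = 0"
  shows "(cmod (sum f S))\<^sup>2 = (\<Sum>i\<in>S. (cmod (f i))\<^sup>2)"
proof (cases "\<exists>i\<in>S. f i \<noteq> 0")
  case True
  then obtain i where i: "i \<in> S" "f i \<noteq> 0"
    by blast
  then have "f j = 0" if "j \<in> S - {i}" for j
    using assms(2)[of i j] that by auto
  then show ?thesis
    using assms(1) i(1) by (simp add: sum.remove)
qed simp

lemma summable_on_sum_fun: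
  fixes f :: "'i \<Rightarrow> 'a \<Rightarrow> real"
  assumes "finite S" "\<And>i. i \<in> S \<Longrightarrow> f i summable_on A"
  shows "(\<lambda>x. \<Sum>i\<in>S. f i x) summable_on A"
  using assms by (induction S rule: finite_induct) (simp_all add: summable_on_add)

text \<open>Applied to the coefficients \<open>A w\<^sub>1 + B w\<^sub>0\<close> of \<open>F w\<close> and \<open>C w\<^sub>0 + D w\<^sub>1\<close> of \<open>E w\<close>; the hypotheses
  are the adjointness relations between \<open>E\<close> and \<open>F\<close>.\<close>

lemma norm_sq_exchange_identity:
  fixes A B C D w1 w0 q c X0 X1 Y0 Y1 :: complex
  assumes A: "A * cnj A * X0 * w1 = q * X1 * w1" and C: "C * cnj C * X1 * w0 = q * X0 * w0"
    and B: "B * cnj B * Y1 = c * Y0" and D: "D * cnj D * Y0 = c * Y1"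
    and AB: "A * cnj B * X0 * Y1 * w1 * cnj w0 = cnj C * D * X1 * Y0 * w1 * cnj w0"
    and CD: "cnj A * B * X0 * Y1 * w0 * cnj w1 = C * cnj D * X1 * Y0 * w0 * cnj w1"
  shows "(A * w1 + B * w0) * cnj (A * w1 + B * w0) * X0 * Y1
       = (C * w0 + D * w1) * cnj (C * w0 + D * w1) * X1 * Y0
         + (q - c) * (w1 * cnj w1 * X1 * Y1 - w0 * cnj w0 * X0 * Y0)"
proof -
  have "(A * w1 + B * w0) * cnj (A * w1 + B * w0) * X0 * Y1
      - ((C * w0 + D * w1) * cnj (C * w0 + D * w1) * X1 * Y0
         + (q - c) * (w1 * cnj w1 * X1 * Y1 - w0 * cnj w0 * X0 * Y0)) =
     cnj w1 * Y1 * (A * cnj A * X0 * w1 - q * X1 * w1)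
     + (A * cnj B * X0 * Y1 * w1 * cnj w0 - cnj C * D * X1 * Y0 * w1 * cnj w0)
     + (cnj A * B * X0 * Y1 * w0 * cnj w1 - C * cnj D * X1 * Y0 * w0 * cnj w1)
     + w0 * cnj w0 * X0 * (B * cnj B * Y1 - c * Y0)
     - cnj w0 * Y0 * (C * cnj C * X1 * w0 - q * X0 * w0)
     - w1 * cnj w1 * X1 * (D * cnj D * Y0 - c * Y1)"
    by (simp add: algebra_simps)
  also have "\<dots> = 0"
    unfolding A B C D AB CD by simp
  finally show ?thesis
    by simp
qed

lemma not_negint_0 [simp]: "\<not> negint 0"
  by (simp add: negint_def)

lemma negint_of_int: "negint (of_int n) \<longleftrightarrow> n < 0"
  unfolding negint_def by auto

lemma negint_of_real: "negint (of_real r) \<longleftrightarrow> r \<in> \<int> \<and> r < 0"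
  unfolding negint_def
  by (metis (full_types) Ints_cases Ints_of_int of_int_less_0_iff of_real_eq_iff of_real_of_int_eq)

lemma Kset_of_real_neg: "l < 0 \<Longrightarrow> Kset (of_real l) 0 = {k. k \<le> 0}"
  unfolding Kset_def
  by (auto simp: of_real_eq_iff[symmetric]) (metis of_int_less_0_iff of_real_of_int_eq of_real_eq_iff)

lemma eE_of_real_neg:
  "l < 0 \<Longrightarrow> eE (of_real l) 0 k =
     (if l \<in> \<int> then (of_real l + of_int k + 1) * (- of_int k) else - of_int k)"
  by (simp add: eE_def negint_of_real)

lemma eF_of_real_neg:
  "l < 0 \<Longrightarrow> eF (of_real l) 0 k = (if l \<in> \<int> then 1 else of_real l + of_int k)"
  by (simp add: eF_def negint_of_real)

lemma eE_of_real_neg_index: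
  "a < 0 \<Longrightarrow> eE (of_real a) 0 (- int j - 1) =
     of_real (if a \<in> \<int> then (a - real j) * (real j + 1) else real j + 1)"
  by (simp add: eE_of_real_neg algebra_simps)

lemma eF_of_real_neg_index:
  "a < 0 \<Longrightarrow> eF (of_real a) 0 (- int j) = of_real (if a \<in> \<int> then 1 else a - real j)"
  by (simp add: eF_of_real_neg)

lemma eE_of_real_neg_index_nonzero: "a < 0 \<Longrightarrow> eE (of_real a) 0 (- int j - 1) \<noteq> 0"
  by (simp add: eE_of_real_neg_index)

lemma eF_of_real_neg_index_nonzero: "a < 0 \<Longrightarrow> eF (of_real a) 0 (- int j) \<noteq> 0"
  by (simp add: eF_of_real_neg_index)

lemma eE_eF_of_real_neg:
  "a < 0 \<Longrightarrow> eE (of_real a) 0 (- int j - 1) * eF (of_real a) 0 (- int j) =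
     of_real ((real j + 1) * (a - real j))"
  by (auto simp: eE_of_real_neg_index eF_of_real_neg_index field_simps)

lemma ynorm2_0 [simp]: "ynorm2 a 0 = 1"
  by (simp add: ynorm2_def)

lemma ynorm2_Suc:
  "ynorm2 a (Suc j) = ynorm2 a j *
     (if a \<in> \<int> then real (Suc j) * (real j - a) else real (Suc j) / (real j - a))"
  unfolding ynorm2_def by (auto simp: prod.nat_ivl_Suc' field_simps)

lemma ynorm2_pos: "a < 0 \<Longrightarrow> ynorm2 a j > 0"
  by (induction j) (simp_all add: ynorm2_Suc)

text \<open>\<open>E\<close> and \<open>-F\<close> are adjoint for the norms \<open>ynorm2\<close>; \<open>xnorm2_adjoint\<close> is the analogue for \<open>N(a\<^sub>1,a\<^sub>2)\<close>.\<close>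

lemma ynorm2_adjoint:
  assumes "a < 0"
  shows "of_real (ynorm2 a (Suc j)) * cnj (eF (of_real a) 0 (- int j))
       = - eE (of_real a) 0 (- int j - 1) * of_real (ynorm2 a j)"
proof -
  have "real j - a \<noteq> 0"
    using assms by simp
  then have "ynorm2 a (Suc j) * (if a \<in> \<int> then 1 else a - real j) =
        - (if a \<in> \<int> then (a - real j) * (real j + 1) else real j + 1) * ynorm2 a j"
    by (auto simp: ynorm2_Suc field_simps)
  then show ?thesis
    using assms by (simp add: eE_of_real_neg_index eF_of_real_neg_index flip: of_real_mult)
qed

lemma ynorm2_adjoint_cnj:
  assumes "a < 0"
  shows "of_real (ynorm2 a (Suc j)) * eF (of_real a) 0 (- int j)
       = - cnj (eE (of_real a) 0 (- int j - 1)) * of_real (ynorm2 a j)"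
proof -
  have "cnj (of_real (ynorm2 a (Suc j)) * cnj (eF (of_real a) 0 (- int j)))
      = cnj (- eE (of_real a) 0 (- int j - 1) * of_real (ynorm2 a j))"
    using ynorm2_adjoint[OF assms, of j] by simp
  then show ?thesis
    by simp
qed

lemma eE_eF_diff: "eE c1 c2 (k - 1) * eF c1 c2 k - eE c1 c2 k * eF c1 c2 (k + 1) = hw c1 c2 k"
  unfolding eE_def eF_def hw_def by (auto simp: algebra_simps)

lemma eE_eF_eq_0_if_pred_notin_Kset:
  assumes "k \<in> Kset c1 c2" "k - 1 \<notin> Kset c1 c2"
  shows "eE c1 c2 (k - 1) * eF c1 c2 k = 0"
proof -
  from assms consider
      (left) n where "c1 = of_int n" "n \<ge> 0" "k = - n"
    | (right) n where "c2 = of_int n" "n < 0" "k = n + 1"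
    unfolding Kset_def by (auto; smt (verit))
  then show ?thesis
    by cases (auto simp: eF_def negint_of_int)
qed

lemma eE_eF_eq_0_if_succ_notin_Kset:
  assumes "k \<in> Kset c1 c2" "k + 1 \<notin> Kset c1 c2"
  shows "eE c1 c2 k * eF c1 c2 (k + 1) = 0"
proof -
  from assms consider
      (left) n where "c1 = of_int n" "n < 0" "k = - n - 1"
    | (right) n where "c2 = of_int n" "n \<ge> 0" "k = n"
    unfolding Kset_def by (auto; smt (verit))
  then show ?thesis
    by cases (auto simp: eE_def negint_of_int)
qed

lemma eE_eF_commutator:
  assumes "k \<in> Kset c1 c2"
  shows "(if k - 1 \<in> Kset c1 c2 then eE c1 c2 (k - 1) * eF c1 c2 k else 0)
       - (if k + 1 \<in> Kset c1 c2 then eE c1 c2 k * eF c1 c2 (k + 1) else 0) = hw c1 c2 k"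
  using eE_eF_diff[of c1 c2 k] eE_eF_eq_0_if_pred_notin_Kset[OF assms]
    eE_eF_eq_0_if_succ_notin_Kset[OF assms]
  by (auto split: if_splits)

lemma tE_apply: "tE a1 a2 a u (k, m) =
   (if k \<in> Kset a1 a2 then eE a1 a2 (k - 1) * u (k - 1, m) else 0) +
   (if m \<in> Kset (of_real a) 0 then eE (of_real a) 0 (m - 1) * u (k, m - 1) else 0)"
  unfolding tE_def actE_def by simp

lemma tF_apply: "tF a1 a2 a u (k, m) =
   (if k \<in> Kset a1 a2 then eF a1 a2 (k + 1) * u (k + 1, m) else 0) +
   (if m \<in> Kset (of_real a) 0 then eF (of_real a) 0 (m + 1) * u (k, m + 1) else 0)"
  unfolding tF_def actF_def by simp

lemma tH_apply: "tH a1 a2 a u (k, m) =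
   (if k \<in> Kset a1 a2 then hw a1 a2 k * u (k, m) else 0) +
   (if m \<in> Kset (of_real a) 0 then hw (of_real a) 0 m * u (k, m) else 0)"
  unfolding tH_def actH_def by simp

lemma FS_eq_0: "u \<in> FS a1 a2 a \<Longrightarrow> k \<notin> Kset a1 a2 \<or> m \<notin> Kset (of_real a) 0 \<Longrightarrow> u (k, m) = 0"
  unfolding FS_def by auto

lemma tE_in_FS: "u \<in> FS a1 a2 a \<Longrightarrow> tE a1 a2 a u \<in> FS a1 a2 a"
  unfolding FS_def by (auto simp: tE_apply)

lemma tF_in_FS: "u \<in> FS a1 a2 a \<Longrightarrow> tF a1 a2 a u \<in> FS a1 a2 a"
  unfolding FS_def by (auto simp: tF_apply)

lemma tH_FS: "u \<in> FS a1 a2 a \<Longrightarrow> tH a1 a2 a u (k, m) = (hw a1 a2 k + hw (of_real a) 0 m) * u (k, m)"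
  by (auto simp: tH_apply FS_eq_0 algebra_simps)

lemma tE_tF_commutator: "tE a1 a2 a (tF a1 a2 a u) p - tF a1 a2 a (tE a1 a2 a u) p = tH a1 a2 a u p"
proof -
  obtain k m where p: "p = (k, m)"
    by (cases p)
  define K1 where "K1 = Kset a1 a2"
  define K2 where "K2 = Kset (of_real a) 0"
  have c1: "k \<in> K1 \<Longrightarrow> hw a1 a2 k =
      (if k - 1 \<in> K1 then eE a1 a2 (k - 1) * eF a1 a2 k else 0)
    - (if k + 1 \<in> K1 then eE a1 a2 k * eF a1 a2 (k + 1) else 0)"
    unfolding K1_def by (rule eE_eF_commutator[symmetric])
  have c2: "m \<in> K2 \<Longrightarrow> hw (of_real a) 0 m =
      (if m - 1 \<in> K2 then eE (of_real a) 0 (m - 1) * eF (of_real a) 0 m else 0)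
    - (if m + 1 \<in> K2 then eE (of_real a) 0 m * eF (of_real a) 0 (m + 1) else 0)"
    unfolding K2_def by (rule eE_eF_commutator[symmetric])
  show ?thesis
    unfolding p tE_apply tF_apply tH_apply K1_def[symmetric] K2_def[symmetric]
    by (cases "k \<in> K1"; cases "m \<in> K2"; cases "k - 1 \<in> K1"; cases "k + 1 \<in> K1";
        cases "m - 1 \<in> K2"; cases "m + 1 \<in> K2") (simp_all add: c1 c2 algebra_simps)
qed

lemma tH_tF_commutator:
  assumes "u \<in> FS a1 a2 a"
  shows "tH a1 a2 a (tF a1 a2 a u) p = tF a1 a2 a (tH a1 a2 a u) p - 2 * tF a1 a2 a u p"
proof -
  obtain k m where p: "p = (k, m)"
    by (cases p)
  show ?thesis
    unfolding p tH_FS[OF tF_in_FS[OF assms]]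
    by (cases "k \<in> Kset a1 a2"; cases "m \<in> Kset (of_real a) 0")
      (auto simp: tF_apply tH_FS[OF assms] FS_eq_0[OF assms] hw_def algebra_simps)
qed

lemma tE_scale: "tE a1 a2 a (\<lambda>p. c * u p) = (\<lambda>p. c * tE a1 a2 a u p)"
  by (rule ext, case_tac p) (simp add: tE_apply algebra_simps)

lemma tF_scale: "tF a1 a2 a (\<lambda>p. c * u p) = (\<lambda>p. c * tF a1 a2 a u p)"
  by (rule ext, case_tac p) (simp add: tF_apply algebra_simps)

lemma tH_scale: "tH a1 a2 a (\<lambda>p. c * u p) = (\<lambda>p. c * tH a1 a2 a u p)"
  by (rule ext, case_tac p) (simp add: tH_apply algebra_simps)

lemma tE_sum: "tE a1 a2 a (\<lambda>p. \<Sum>i\<in>S. f i p) = (\<lambda>p. \<Sum>i\<in>S. tE a1 a2 a (f i) p)"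
  by (rule ext, case_tac p) (simp add: tE_apply sum_distrib_left sum.distrib)

lemma tF_sum: "tF a1 a2 a (\<lambda>p. \<Sum>i\<in>S. f i p) = (\<lambda>p. \<Sum>i\<in>S. tF a1 a2 a (f i) p)"
  by (rule ext, case_tac p) (simp add: tF_apply sum_distrib_left sum.distrib)

lemma tH_sum: "tH a1 a2 a (\<lambda>p. \<Sum>i\<in>S. f i p) = (\<lambda>p. \<Sum>i\<in>S. tH a1 a2 a (f i) p)"
  by (rule ext, case_tac p) (simp add: tH_apply sum_distrib_left sum.distrib)

lemma tE_zero [simp]: "tE a1 a2 a (\<lambda>p. 0) = (\<lambda>p. 0)"
  by (rule ext, case_tac p) (simp add: tE_apply)

lemma tF_zero [simp]: "tF a1 a2 a (\<lambda>p. 0) = (\<lambda>p. 0)"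
  by (rule ext, case_tac p) (simp add: tF_apply)

lemma weight_eq_if_nonzero:
  assumes "u \<in> FS a1 a2 a" "tH a1 a2 a u = (\<lambda>p. \<mu> * u p)" "u (k, m) \<noteq> 0"
  shows "\<mu> = a1 - a2 + of_real a + 2 * of_int (k + m)"
proof -
  have "\<mu> * u (k, m) = (hw a1 a2 k + hw (of_real a) 0 m) * u (k, m)"
    using tH_FS[OF assms(1), of k m] assms(2) by metis
  with assms(3) have "\<mu> = hw a1 a2 k + hw (of_real a) 0 m"
    by simp
  then show ?thesis
    by (simp add: hw_def algebra_simps)
qed

lemma weight_vector_antidiagonal:
  assumes "u \<in> FS a1 a2 a"
    and "tH a1 a2 a u = (\<lambda>p. (a1 - a2 + of_real a + 2 * of_int d) * u p)" "u (k, m) \<noteq> 0"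
  shows "k + m = d"
proof -
  have "(of_int (2 * d) :: complex) = of_int (2 * (k + m))"
    using weight_eq_if_nonzero[OF assms] by simp
  then show ?thesis
    by (simp only: of_int_eq_iff) presburger
qed

definition admissible :: "complex \<Rightarrow> complex \<Rightarrow> bool" where
  "admissible a1 a2 \<longleftrightarrow> (a1 = 0 \<and> Im a2 = 0 \<and> Re a2 < 0)
       \<or> (\<exists>x y. -1 \<le> x \<and> x < 0 \<and> y > 0 \<and> a1 = Complex (-1 - x) y \<and> a2 = Complex x y)
       \<or> (Im a1 = 0 \<and> Im a2 = 0 \<and> -1 < Re a1 \<and> Re a1 < 0 \<and> -1 < Re a2 \<and> Re a2 < 0)"

lemma admissibleE:
  assumes "admissible a1 a2"
  obtains (zero) r2 where "a1 = 0" "a2 = of_real r2" "r2 < 0"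
    | (complex) x y where "-1 \<le> x" "x < 0" "y > 0" "a1 = Complex (-1 - x) y" "a2 = Complex x y"
    | (interval) r1 r2 where "a1 = of_real r1" "a2 = of_real r2" "-1 < r1" "r1 < 0" "-1 < r2" "r2 < 0"
  using assms unfolding admissible_def by (metis Re_complex_of_real complex_eq_iff Im_complex_of_real)

lemma not_Ints_between_neg1_0: "-1 < r \<Longrightarrow> r < 0 \<Longrightarrow> (r::real) \<notin> \<int>"
  by (auto elim!: Ints_cases)

lemma of_real_neq_of_int_between_neg1_0: "-1 < r \<Longrightarrow> r < 0 \<Longrightarrow> of_real r \<noteq> (of_int n :: complex)"
  using not_Ints_between_neg1_0 by (metis Ints_of_int of_real_eq_iff of_real_of_int_eq)

lemma Kset_admissible:
  assumes "admissible a1 a2"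
  shows "Kset a1 a2 = (if a1 = 0 then {k. 0 \<le> k} else UNIV)"
  using assms
proof (cases rule: admissibleE)
  case (zero r2)
  have "of_real r2 = (of_int n :: complex) \<Longrightarrow> n < 0" for n
    using zero(3) by (metis of_int_less_0_iff of_real_of_int_eq of_real_eq_iff)
  then show ?thesis
    using zero unfolding Kset_def by force
next
  case (complex x y)
  then show ?thesis
    unfolding Kset_def by (auto simp: complex_eq_iff)
next
  case (interval r1 r2)
  then show ?thesis
    unfolding Kset_def by (auto simp: of_real_neq_of_int_between_neg1_0)
qed

lemma Kset_admissible_add:
  "admissible a1 a2 \<Longrightarrow> k \<in> Kset a1 a2 \<Longrightarrow> k + int j \<in> Kset a1 a2"
  by (simp add: Kset_admissible split: if_splits)

lemma admissible_not_negint: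
  assumes "admissible a1 a2"
  shows "\<not> negint a1" "a1 \<noteq> 0 \<Longrightarrow> \<not> negint a2"
proof -
  have "\<not> negint a1 \<and> (a1 \<noteq> 0 \<longrightarrow> \<not> negint a2)"
    using assms
  proof (cases rule: admissibleE)
    case (complex x y)
    then show ?thesis
      by (auto simp: negint_def complex_eq_iff)
  next
    case (interval r1 r2)
    then show ?thesis
      by (auto simp: negint_def of_real_neq_of_int_between_neg1_0)
  qed simp
  then show "\<not> negint a1" "a1 \<noteq> 0 \<Longrightarrow> \<not> negint a2"
    by auto
qed

definition ladder_prod :: "complex \<Rightarrow> complex \<Rightarrow> int \<Rightarrow> complex" where
  "ladder_prod a1 a2 k = (of_int k - 1 - a2) * (of_int k + a1)"

lemma eE_eF_admissible: "admissible a1 a2 \<Longrightarrow> eE a1 a2 (k - 1) * eF a1 a2 k = - ladder_prod a1 a2 k"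
  using admissible_not_negint[of a1 a2]
  by (cases "a1 = 0") (auto simp: eE_def eF_def ladder_prod_def algebra_simps)

definition xnorm_real :: "real \<Rightarrow> real \<Rightarrow> int \<Rightarrow> real" where
  "xnorm_real r1 r2 k =
     (if 0 \<le> k then \<Prod>j\<in>{1..nat k}. (real j + r1) / (real j - 1 - r2)
      else \<Prod>j\<in>{1..nat (- k)}. (real j + r2) / (real j - 1 - r1))"

definition xnorm_negint :: "real \<Rightarrow> int \<Rightarrow> real" where
  "xnorm_negint r2 k = fact (nat k) * (\<Prod>j\<in>{1..nat k}. (real j - 1 - r2))"

lemma xnorm2_of_real:
  "\<not> negint (of_real r2) \<Longrightarrow> xnorm2 (of_real r1) (of_real r2) k = of_real (xnorm_real r1 r2 k)"
  unfolding xnorm2_def xnorm_real_def by simp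

lemma xnorm2_negint:
  "negint (of_real r2) \<Longrightarrow> 0 \<le> k \<Longrightarrow> xnorm2 0 (of_real r2) k = of_real (xnorm_negint r2 k)"
  unfolding xnorm2_def xnorm_negint_def by auto

lemma xnorm2_complex:
  assumes "y > 0"
  shows "xnorm2 (Complex (-1 - x) y) (Complex x y) k = 1"
proof -
  have factors_1: "(of_nat j + Complex (-1 - x) y) / (of_nat j - 1 - cnj (Complex x y)) = 1"
    "(of_nat j + cnj (Complex x y)) / (of_nat j - 1 - Complex (-1 - x) y) = 1" for j :: nat
    using assms by (simp_all only: divide_eq_1_iff) (simp_all add: complex_eq_iff)
  have "\<not> negint (Complex x y)"
    using assms by (auto simp: negint_def complex_eq_iff)
  then show ?thesis
    unfolding xnorm2_def by (simp add: factors_1)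
qed

lemma xnorm_real_succ:
  assumes "r2 < 0"
  shows "xnorm_real r1 r2 (int n + 1) * (real n - r2) = xnorm_real r1 r2 (int n) * (real (Suc n) + r1)"
proof -
  have "nat (int n + 1) = Suc n"
    by simp
  then show ?thesis
    using assms unfolding xnorm_real_def by (simp add: prod.nat_ivl_Suc')
qed

lemma xnorm_real_pred:
  assumes "real n - r1 \<noteq> 0"
  shows "xnorm_real r1 r2 (- int n - 1) * (real n - r1) = xnorm_real r1 r2 (- int n) * (real (Suc n) + r2)"
proof -
  have "nat (- (- int n - 1)) = Suc n"
    by simp
  then show ?thesis
    using assms unfolding xnorm_real_def by (cases "n = 0") (auto simp: prod.nat_ivl_Suc')
qed

lemma xnorm_real_rec:
  assumes "1 \<le> k \<and> r2 < 0 \<or> k \<le> 0 \<and> - real_of_int k - r1 \<noteq> 0"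
  shows "(real_of_int k + r1) * xnorm_real r1 r2 (k - 1) = (real_of_int k - 1 - r2) * xnorm_real r1 r2 k"
  using assms
proof
  assume *: "1 \<le> k \<and> r2 < 0"
  define n where "n = nat (k - 1)"
  have "k = int n + 1"
    using * n_def by simp
  then show ?thesis
    using xnorm_real_succ[of r2 r1 n] * by (simp add: algebra_simps)
next
  assume *: "k \<le> 0 \<and> - real_of_int k - r1 \<noteq> 0"
  define n where "n = nat (- k)"
  have "k = - int n"
    using * n_def by simp
  then show ?thesis
    using xnorm_real_pred[of n r1 r2] * by (simp add: algebra_simps)
qed

lemma xnorm_real_pos:
  assumes "0 \<le> k \<and> -1 < r1 \<and> r2 < 0 \<or> (-1 < r1 \<and> r1 < 0 \<and> -1 < r2 \<and> r2 < 0)"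
  shows "xnorm_real r1 r2 k > 0"
proof (cases "0 \<le> k")
  case True
  have "(\<Prod>j\<in>{1..nat k}. (real j + r1) / (real j - 1 - r2)) > 0"
    using assms by (intro prod_pos) auto
  with True show ?thesis
    unfolding xnorm_real_def by simp
next
  case False
  have "(\<Prod>j\<in>{1..nat (- k)}. (real j + r2) / (real j - 1 - r1)) > 0"
    using assms False by (intro prod_pos) auto
  with False show ?thesis
    unfolding xnorm_real_def by simp
qed

lemma xnorm_negint_rec:
  "1 \<le> k \<Longrightarrow> xnorm_negint r2 k = xnorm_negint r2 (k - 1) * real_of_int k * (real_of_int k - 1 - r2)"
proof -
  assume "1 \<le> k"
  define n where "n = nat (k - 1)"
  have k: "k = int n + 1"
    using \<open>1 \<le> k\<close> n_def by simp
  have "nat (int n + 1) = Suc n"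
    by simp
  then show ?thesis
    unfolding k xnorm_negint_def by (simp add: prod.nat_ivl_Suc' algebra_simps)
qed

lemma xnorm_negint_pos: "r2 < 0 \<Longrightarrow> xnorm_negint r2 k > 0"
  unfolding xnorm_negint_def by (intro mult_pos_pos prod_pos) auto

lemma xnorm2_admissible_pos:
  assumes "admissible a1 a2" "k \<in> Kset a1 a2"
  shows "Re (xnorm2 a1 a2 k) > 0"
  using assms(1)
proof (cases rule: admissibleE)
  case (zero r2)
  then have "0 \<le> k"
    using assms Kset_admissible by auto
  with zero show ?thesis
    using xnorm2_of_real[of r2 0 k]
    by (cases "negint a2") (simp_all add: xnorm2_negint xnorm_negint_pos xnorm_real_pos)
next
  case (complex x y)
  then show ?thesis
    by (simp add: xnorm2_complex)
next
  case (interval r1 r2)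
  then show ?thesis
    using admissible_not_negint(2)[OF assms(1)] by (simp add: xnorm2_of_real xnorm_real_pos)
qed

lemma xnorm2_adjoint:
  assumes "admissible a1 a2" "k \<in> Kset a1 a2" "k - 1 \<in> Kset a1 a2"
  shows "cnj (eF a1 a2 k) * of_real (Re (xnorm2 a1 a2 (k - 1)))
       = - eE a1 a2 (k - 1) * of_real (Re (xnorm2 a1 a2 k))"
  using assms(1)
proof (cases rule: admissibleE)
  case (zero r2)
  then have k: "1 \<le> k"
    using assms Kset_admissible by auto
  show ?thesis
  proof (cases "negint a2")
    case True
    have "real_of_int k * (r2 - real_of_int k + 1) * xnorm_negint r2 (k - 1) = - xnorm_negint r2 k"
      using xnorm_negint_rec[OF k, of r2] by (simp add: algebra_simps)
    then have "complex_of_real (real_of_int k * (r2 - real_of_int k + 1) * xnorm_negint r2 (k - 1))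
        = complex_of_real (- xnorm_negint r2 k)"
      by simp
    with True zero k show ?thesis
      by (simp add: xnorm2_negint eE_def eF_def algebra_simps)
  next
    case False
    have "real_of_int k * xnorm_real 0 r2 (k - 1) = (real_of_int k - 1 - r2) * xnorm_real 0 r2 k"
      using xnorm_real_rec[of k r2 0] k zero by simp
    then have "complex_of_real (real_of_int k * xnorm_real 0 r2 (k - 1))
        = complex_of_real ((real_of_int k - 1 - r2) * xnorm_real 0 r2 k)"
      by simp
    with False zero show ?thesis
      using xnorm2_of_real[of r2 0 k] xnorm2_of_real[of r2 0 "k - 1"]
      by (simp add: eE_def eF_def algebra_simps)
  qed
next
  case (complex x y)
  then have "\<not> negint a1" "\<not> negint a2"
    by (auto simp: negint_def complex_eq_iff)
  with complex show ?thesis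
    unfolding complex(4,5) by (simp add: xnorm2_complex eE_def eF_def complex_eq_iff)
next
  case (interval r1 r2)
  have "1 \<le> k \<and> r2 < 0 \<or> k \<le> 0 \<and> - real_of_int k - r1 \<noteq> 0"
    using interval by auto
  then have "complex_of_real ((real_of_int k + r1) * xnorm_real r1 r2 (k - 1))
      = complex_of_real ((real_of_int k - 1 - r2) * xnorm_real r1 r2 k)"
    by (simp only: xnorm_real_rec)
  with interval admissible_not_negint[OF assms(1)] show ?thesis
    by (simp add: xnorm2_of_real eE_def eF_def algebra_simps)
qed

lemma xnorm2_adjoint_cnj:
  assumes "admissible a1 a2" "k \<in> Kset a1 a2" "k - 1 \<in> Kset a1 a2"
  shows "eF a1 a2 k * of_real (Re (xnorm2 a1 a2 (k - 1)))
       = - cnj (eE a1 a2 (k - 1)) * of_real (Re (xnorm2 a1 a2 k))"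
proof -
  have "cnj (cnj (eF a1 a2 k) * of_real (Re (xnorm2 a1 a2 (k - 1))))
      = cnj (- eE a1 a2 (k - 1) * of_real (Re (xnorm2 a1 a2 k)))"
    using xnorm2_adjoint[OF assms] by simp
  then show ?thesis
    by simp
qed

lemma ladder_prod_admissible:
  assumes "admissible a1 a2" "k \<in> Kset a1 a2" "k - 1 \<in> Kset a1 a2"
  shows "Im (ladder_prod a1 a2 k) = 0" "Re (ladder_prod a1 a2 k) > 0"
proof -
  from assms(1) have "Im (ladder_prod a1 a2 k) = 0 \<and> Re (ladder_prod a1 a2 k) > 0"
  proof (cases rule: admissibleE)
    case (zero r2)
    then have "1 \<le> k"
      using assms Kset_admissible by auto
    with zero show ?thesis
      by (simp add: ladder_prod_def)
  next
    case (complex x y)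
    have "(real_of_int k - 1 - x) * (real_of_int k - 1 - x) + y * y > 0"
      using complex by (intro add_nonneg_pos) auto
    with complex show ?thesis
      by (simp add: ladder_prod_def algebra_simps)
  next
    case (interval r1 r2)
    have "(real_of_int k - 1 - r2) * (real_of_int k + r1) > 0"
    proof (cases "1 \<le> k")
      case True
      then show ?thesis
        using interval by (intro mult_pos_pos) auto
    next
      case False
      then show ?thesis
        using interval by (intro mult_neg_neg) auto
    qed
    with interval show ?thesis
      by (simp add: ladder_prod_def)
  qed
  then show "Im (ladder_prod a1 a2 k) = 0" "Re (ladder_prod a1 a2 k) > 0"
    by auto
qed

lemma ladder_prod_admissible_eq_of_real:
  "admissible a1 a2 \<Longrightarrow> k \<in> Kset a1 a2 \<Longrightarrow> k - 1 \<in> Kset a1 a2 \<Longrightarrow>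
     ladder_prod a1 a2 k = of_real (Re (ladder_prod a1 a2 k))"
  using ladder_prod_admissible(1) by (simp add: complex_eq_iff)

lemma Kset_admissible_boundary:
  assumes "admissible a1 a2" "k \<in> Kset a1 a2" "k - 1 \<notin> Kset a1 a2"
  shows "eF a1 a2 k = 0" "ladder_prod a1 a2 k = 0"
proof -
  have "a1 = 0" "k = 0"
    using assms Kset_admissible[OF assms(1)] by (auto split: if_splits)
  then show "eF a1 a2 k = 0" "ladder_prod a1 a2 k = 0"
    by (simp_all add: eF_def ladder_prod_def)
qed

lemma eF_norm_xnorm2:
  assumes "admissible a1 a2" "k \<in> Kset a1 a2"
  shows "eF a1 a2 k * cnj (eF a1 a2 k) * of_real (Re (xnorm2 a1 a2 (k - 1)))
       = of_real (Re (ladder_prod a1 a2 k)) * of_real (Re (xnorm2 a1 a2 k))"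
proof (cases "k - 1 \<in> Kset a1 a2")
  case True
  have "eF a1 a2 k * cnj (eF a1 a2 k) * of_real (Re (xnorm2 a1 a2 (k - 1)))
      = - (eE a1 a2 (k - 1) * eF a1 a2 k) * of_real (Re (xnorm2 a1 a2 k))"
    using xnorm2_adjoint[OF assms True] by (simp add: mult.assoc)
  also have "\<dots> = of_real (Re (ladder_prod a1 a2 k)) * of_real (Re (xnorm2 a1 a2 k))"
    using eE_eF_admissible[OF assms(1)] ladder_prod_admissible_eq_of_real[OF assms True] by simp
  finally show ?thesis .
next
  case False
  then show ?thesis
    using Kset_admissible_boundary[OF assms False] by simp
qed

lemma eE_norm_xnorm2:
  assumes "admissible a1 a2" "k \<in> Kset a1 a2" "k - 1 \<in> Kset a1 a2"
  shows "eE a1 a2 (k - 1) * cnj (eE a1 a2 (k - 1)) * of_real (Re (xnorm2 a1 a2 k))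
       = of_real (Re (ladder_prod a1 a2 k)) * of_real (Re (xnorm2 a1 a2 (k - 1)))"
proof -
  have "eE a1 a2 (k - 1) * cnj (eE a1 a2 (k - 1)) * of_real (Re (xnorm2 a1 a2 k))
      = - cnj (eE a1 a2 (k - 1) * eF a1 a2 k) * of_real (Re (xnorm2 a1 a2 (k - 1)))"
    using xnorm2_adjoint[OF assms] by (simp add: mult.assoc mult.left_commute)
  also have "\<dots> = of_real (Re (ladder_prod a1 a2 k)) * of_real (Re (xnorm2 a1 a2 (k - 1)))"
    using eE_eF_admissible[OF assms(1)] ladder_prod_admissible_eq_of_real[OF assms]
    by (metis complex_cnj_complex_of_real complex_cnj_minus minus_minus)
  finally show ?thesis .
qed

lemma eF_norm_ynorm2:
  assumes "a < 0"
  shows "eF (of_real a) 0 (- int j) * cnj (eF (of_real a) 0 (- int j)) * of_real (ynorm2 a (Suc j))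
       = of_real ((real j + 1) * (real j - a)) * of_real (ynorm2 a j)"
proof -
  have "eF (of_real a) 0 (- int j) * cnj (eF (of_real a) 0 (- int j)) * of_real (ynorm2 a (Suc j))
      = eF (of_real a) 0 (- int j) * (of_real (ynorm2 a (Suc j)) * cnj (eF (of_real a) 0 (- int j)))"
    by (simp add: ac_simps)
  also have "\<dots> = - (eE (of_real a) 0 (- int j - 1) * eF (of_real a) 0 (- int j)) * of_real (ynorm2 a j)"
    unfolding ynorm2_adjoint[OF assms] by (simp add: ac_simps)
  finally show ?thesis
    unfolding eE_eF_of_real_neg[OF assms] by (simp add: algebra_simps)
qed

lemma eE_norm_ynorm2:
  assumes "a < 0"
  shows "eE (of_real a) 0 (- int j - 1) * cnj (eE (of_real a) 0 (- int j - 1)) * of_real (ynorm2 a j)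
       = of_real ((real j + 1) * (real j - a)) * of_real (ynorm2 a (Suc j))"
proof -
  have conj: "cnj (eE (of_real a) 0 (- int j - 1)) * of_real (ynorm2 a j)
      = - (of_real (ynorm2 a (Suc j)) * eF (of_real a) 0 (- int j))"
    using ynorm2_adjoint_cnj[OF assms, of j] by simp
  have "eE (of_real a) 0 (- int j - 1) * cnj (eE (of_real a) 0 (- int j - 1)) * of_real (ynorm2 a j)
      = eE (of_real a) 0 (- int j - 1) * (cnj (eE (of_real a) 0 (- int j - 1)) * of_real (ynorm2 a j))"
    by (simp add: ac_simps)
  also have "\<dots> = - (eE (of_real a) 0 (- int j - 1) * eF (of_real a) 0 (- int j)) * of_real (ynorm2 a (Suc j))"
    unfolding conj by (simp add: ac_simps)
  finally show ?thesis
    unfolding eE_eF_of_real_neg[OF assms] by (simp add: algebra_simps)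
qed

text \<open>The summand of \<open>\<parallel>w\<parallel>\<^sup>2\<close> at \<open>z(d + j, j)\<close>; in \<open>FS\<close> this is the coefficient at \<open>(d + j, -j)\<close>.\<close>

definition diag_norm :: "complex \<Rightarrow> complex \<Rightarrow> real \<Rightarrow> (int \<times> int \<Rightarrow> complex) \<Rightarrow> int \<Rightarrow> nat \<Rightarrow> real"
  where "diag_norm a1 a2 a w d j =
    (cmod (w (d + int j, - int j)))\<^sup>2 * Re (xnorm2 a1 a2 (d + int j)) * ynorm2 a j"

lemma diag_norm_scale: "diag_norm a1 a2 a (\<lambda>p. c * w p) d = (\<lambda>j. (cmod c)\<^sup>2 * diag_norm a1 a2 a w d j)"
  by (simp add: diag_norm_def norm_mult power_mult_distrib fun_eq_iff)

lemma diag_norm_zero: "diag_norm a1 a2 a (\<lambda>p. 0) d = (\<lambda>j. 0)"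
  by (simp add: diag_norm_def fun_eq_iff)

lemma diag_norm_nonneg:
  assumes "admissible a1 a2" "a < 0" "w \<in> FS a1 a2 a"
  shows "diag_norm a1 a2 a w d j \<ge> 0"
proof (cases "w (d + int j, - int j) = 0")
  case False
  then have "d + int j \<in> Kset a1 a2"
    using assms(3) unfolding FS_def by blast
  then have "Re (xnorm2 a1 a2 (d + int j)) > 0"
    using xnorm2_admissible_pos[OF assms(1)] by blast
  then show ?thesis
    using ynorm2_pos[OF assms(2), of j] by (simp add: diag_norm_def)
qed (simp add: diag_norm_def)

lemma inV_iff_summable_diag_norm:
  assumes "admissible a1 a2" "a < 0" "w \<in> FS a1 a2 a" "\<And>k m. w (k, m) \<noteq> 0 \<Longrightarrow> k + m = d"
  shows "inV a1 a2 a w \<longleftrightarrow> summable (diag_norm a1 a2 a w d)"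
proof -
  define f where "f = (\<lambda>(k, m). (cmod (w (k, m)))\<^sup>2 * Re (xnorm2 a1 a2 k) * ynorm2 a (nat (- m)))"
  define P where "P = (\<lambda>j::nat. (d + int j, - int j))"
  have "f x = 0" if "x \<notin> range P" for x
  proof -
    obtain k m where x: "x = (k, m)"
      by (cases x)
    show ?thesis
    proof (cases "w (k, m) = 0")
      case False
      then have "m \<in> Kset (of_real a) 0"
        using assms(3) unfolding FS_def by blast
      moreover have "k + m = d"
        using assms(4) False by blast
      ultimately have "x = P (nat (- m))"
        using assms(2) unfolding P_def x by (auto simp: Kset_of_real_neg)
      with that show ?thesis
        by simp
    qed (simp add: f_def x)
  qed
  then have "f summable_on UNIV \<longleftrightarrow> f summable_on range P"
    by (intro summable_on_cong_neutral) auto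
  also have "\<dots> \<longleftrightarrow> (f \<circ> P) summable_on UNIV"
    by (rule summable_on_reindex) (auto simp: inj_on_def P_def)
  also have "f \<circ> P = diag_norm a1 a2 a w d"
    by (auto simp: f_def P_def diag_norm_def fun_eq_iff)
  also have "diag_norm a1 a2 a w d summable_on UNIV \<longleftrightarrow> summable (diag_norm a1 a2 a w d)"
    by (rule summable_on_UNIV_nonneg_real_iff) (rule diag_norm_nonneg[OF assms(1-3)])
  finally show ?thesis
    unfolding inV_def f_def using assms(3) by simp
qed

section \<open>Highest weight vectors\<close>

lemma hilb_sub_highest_weight_vector:
  assumes "hilb_sub lam a1 a2 a"
  obtains v where "v \<in> FS a1 a2 a" "tE a1 a2 a v = (\<lambda>p. 0)" "tH a1 a2 a v = (\<lambda>p. lam * v p)"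
    "v \<noteq> (\<lambda>p. 0)" "inV a1 a2 a v"
proof -
  obtain \<phi> :: "(int \<Rightarrow> complex) \<Rightarrow> (int \<times> int \<Rightarrow> complex)" where
    scale: "\<forall>c. \<forall>v\<in>Nel lam 0. \<phi> (\<lambda>k. c * v k) = (\<lambda>p. c * \<phi> v p)" and
    E: "\<forall>v\<in>Nel lam 0. \<phi> (actE lam 0 v) = tE a1 a2 a (\<phi> v)" and
    H: "\<forall>v\<in>Nel lam 0. \<phi> (actH lam 0 v) = tH a1 a2 a (\<phi> v)" and
    inj: "inj_on \<phi> (Nel lam 0)" and
    V: "\<forall>v\<in>Nel lam 0. \<phi> v \<in> FS a1 a2 a \<and> inV a1 a2 a (\<phi> v)"
    using assms unfolding hilb_sub_def by blast
  define x0 :: "int \<Rightarrow> complex" where "x0 = (\<lambda>k. if k = 0 then 1 else 0)"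
  have "0 \<in> Kset lam 0" "1 \<notin> Kset lam 0"
    unfolding Kset_def by auto
  then have x0: "x0 \<in> Nel lam 0" "actE lam 0 x0 = (\<lambda>k. 0)" "actH lam 0 x0 = (\<lambda>k. lam * x0 k)"
    unfolding Nel_def actE_def actH_def x0_def by (auto simp: fun_eq_iff hw_def)
  have "(\<lambda>k. 0 * x0 k) = (\<lambda>k. 0)"
    by simp
  then have zero: "\<phi> (\<lambda>k. 0) = (\<lambda>p. 0)"
    using scale x0(1) by (metis mult_zero_left)
  have "(\<lambda>k. 0) \<in> Nel lam 0"
    unfolding Nel_def by simp
  have "x0 \<noteq> (\<lambda>k. 0)"
    unfolding x0_def by (auto simp: fun_eq_iff)
  then have "\<phi> x0 \<noteq> (\<lambda>p. 0)"
    using inj x0(1) zero \<open>(\<lambda>k. 0) \<in> Nel lam 0\<close> unfolding inj_on_def by metis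
  moreover have "tE a1 a2 a (\<phi> x0) = (\<lambda>p. 0)"
    using E x0(1,2) zero by metis
  moreover have "tH a1 a2 a (\<phi> x0) = (\<lambda>p. lam * \<phi> x0 p)"
    using H scale x0(1,3) by metis
  ultimately show ?thesis
    using that V x0(1) by blast
qed

lemma hilb_sub_weight:
  assumes "hilb_sub lam a1 a2 a"
  shows "\<exists>n0::int. lam = a1 + of_real a - a2 + 2 * of_int n0"
proof -
  obtain v where v: "v \<in> FS a1 a2 a" "tH a1 a2 a v = (\<lambda>p. lam * v p)" "v \<noteq> (\<lambda>p. 0)"
    using hilb_sub_highest_weight_vector[OF assms] by metis
  then obtain k m where "v (k, m) \<noteq> 0"
    by (metis surj_pair)
  then have "lam = a1 - a2 + of_real a + 2 * of_int (k + m)"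
    using weight_eq_if_nonzero[OF v(1,2)] by blast
  then show ?thesis
    by (intro exI[of _ "k + m"]) (simp add: algebra_simps)
qed

text \<open>The recursion is \<open>E w = 0\<close> read off at \<open>z(n\<^sub>0 + j + 1, j)\<close>.\<close>

primrec hw_coeff :: "complex \<Rightarrow> complex \<Rightarrow> real \<Rightarrow> int \<Rightarrow> nat \<Rightarrow> complex" where
  "hw_coeff a1 a2 a n0 0 = 1"
| "hw_coeff a1 a2 a n0 (Suc j) =
     - eE a1 a2 (n0 + int j) / eE (of_real a) 0 (- int j - 1) * hw_coeff a1 a2 a n0 j"

definition hw_vector :: "complex \<Rightarrow> complex \<Rightarrow> real \<Rightarrow> int \<Rightarrow> int \<times> int \<Rightarrow> complex" where
  "hw_vector a1 a2 a n0 = (\<lambda>(k, m). if k + m = n0 \<and> m \<le> 0 then hw_coeff a1 a2 a n0 (nat (- m)) else 0)"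

lemma hw_vector_diag: "hw_vector a1 a2 a n0 (n0 + int j, - int j) = hw_coeff a1 a2 a n0 j"
  by (simp add: hw_vector_def)

lemma hw_vector_antidiagonal: "hw_vector a1 a2 a n0 (k, m) \<noteq> 0 \<Longrightarrow> k + m = n0"
  by (simp add: hw_vector_def split: if_splits)

context
  fixes a1 a2 :: complex and a :: real and n0 :: int
  assumes admissible: "admissible a1 a2" and neg: "a < 0" and n0_in_Kset: "n0 \<in> Kset a1 a2"
begin

lemma Kset_n0_add: "n0 + int j \<in> Kset a1 a2" "n0 + int j + 1 \<in> Kset a1 a2"
  using Kset_admissible_add[OF admissible n0_in_Kset, of j]
    Kset_admissible_add[OF admissible n0_in_Kset, of "Suc j"] by (simp_all add: ac_simps)

lemma hw_vector_in_FS: "hw_vector a1 a2 a n0 \<in> FS a1 a2 a"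
  unfolding FS_def
proof (intro CollectI allI impI)
  fix k m
  assume not_in: "k \<notin> Kset a1 a2 \<or> m \<notin> Kset (of_real a) 0"
  show "hw_vector a1 a2 a n0 (k, m) = 0"
  proof (rule ccontr)
    assume "hw_vector a1 a2 a n0 (k, m) \<noteq> 0"
    then have "k = n0 + int (nat (- m))" "m \<le> 0"
      by (auto simp: hw_vector_def split: if_splits)
    then show False
      using not_in Kset_n0_add(1)[of "nat (- m)"] by (auto simp: Kset_of_real_neg[OF neg])
  qed
qed

lemma tE_hw_vector: "tE a1 a2 a (hw_vector a1 a2 a n0) = (\<lambda>p. 0)"
proof
  fix p :: "int \<times> int"
  obtain k m where p: "p = (k, m)"
    by (cases p)
  show "tE a1 a2 a (hw_vector a1 a2 a n0) p = 0"
  proof (cases "m \<le> 0 \<and> k + m = n0 + 1")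
    case True
    define j where "j = nat (- m)"
    have m: "m = - int j" and k: "k = n0 + int j + 1"
      using True by (simp_all add: j_def)
    have "nat (- (m - 1)) = Suc j"
      using m by simp
    then have "hw_vector a1 a2 a n0 (k - 1, m) = hw_coeff a1 a2 a n0 j"
      "hw_vector a1 a2 a n0 (k, m - 1) = hw_coeff a1 a2 a n0 (Suc j)"
      using k m by (simp_all add: hw_vector_def)
    moreover have "k \<in> Kset a1 a2" "m \<in> Kset (of_real a) 0"
      using Kset_n0_add(2)[of j] k True by (simp_all add: Kset_of_real_neg[OF neg])
    moreover have "k - 1 = n0 + int j" "m - 1 = - int j - 1"
      using k m by simp_all
    ultimately show ?thesis
      using eE_of_real_neg_index_nonzero[OF neg, of j] unfolding p tE_apply by simp
  next
    case False
    then have "hw_vector a1 a2 a n0 (k - 1, m) = 0"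
      "m \<in> Kset (of_real a) 0 \<Longrightarrow> hw_vector a1 a2 a n0 (k, m - 1) = 0"
      by (auto simp: hw_vector_def Kset_of_real_neg[OF neg])
    then show ?thesis
      unfolding p tE_apply by auto
  qed
qed

lemma tH_hw_vector:
  "tH a1 a2 a (hw_vector a1 a2 a n0) = (\<lambda>p. (a1 - a2 + of_real a + 2 * of_int n0) * hw_vector a1 a2 a n0 p)"
proof
  fix p :: "int \<times> int"
  obtain k m where p: "p = (k, m)"
    by (cases p)
  show "tH a1 a2 a (hw_vector a1 a2 a n0) p = (a1 - a2 + of_real a + 2 * of_int n0) * hw_vector a1 a2 a n0 p"
  proof (cases "hw_vector a1 a2 a n0 (k, m) = 0")
    case False
    then have "(of_int n0 :: complex) = of_int k + of_int m"
      by (metis hw_vector_antidiagonal of_int_add)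
    then show ?thesis
      unfolding p tH_FS[OF hw_vector_in_FS] by (simp add: hw_def algebra_simps)
  qed (simp add: p tH_FS[OF hw_vector_in_FS])
qed

lemma hw_vector_nonzero: "hw_vector a1 a2 a n0 \<noteq> (\<lambda>p. 0)"
  by (metis hw_vector_diag hw_coeff.simps(1) zero_neq_one)

lemma diag_norm_hw_vector_Suc:
  "diag_norm a1 a2 a (hw_vector a1 a2 a n0) n0 (Suc j) =
     diag_norm a1 a2 a (hw_vector a1 a2 a n0) n0 j * Re (ladder_prod a1 a2 (n0 + int j + 1))
       / ((real j + 1) * (real j - a))"
proof -
  define k where "k = n0 + int j + 1"
  define e1 where "e1 = eE a1 a2 (k - 1)"
  define e2 where "e2 = eE (of_real a) 0 (- int j - 1)"
  define h where "h = hw_coeff a1 a2 a n0 j"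
  define X0 X1 where "X0 = Re (xnorm2 a1 a2 (k - 1))" and "X1 = Re (xnorm2 a1 a2 k)"
  define Y0 Y1 where "Y0 = ynorm2 a j" and "Y1 = ynorm2 a (Suc j)"
  define Q where "Q = Re (ladder_prod a1 a2 k)"
  define c where "c = (real j + 1) * (real j - a)"
  have "complex_of_real ((cmod e1)\<^sup>2 * X1) = of_real (Q * X0)"
    using eE_norm_xnorm2[OF admissible, of k] Kset_n0_add[of j]
    unfolding e1_def Q_def X0_def X1_def k_def of_real_mult complex_norm_square by simp
  then have e1_norm: "(cmod e1)\<^sup>2 * X1 = Q * X0"
    by (simp only: of_real_eq_iff)
  have "complex_of_real ((cmod e2)\<^sup>2 * Y0) = of_real (c * Y1)"
    using eE_norm_ynorm2[OF neg, of j] unfolding e2_def c_def Y0_def Y1_def of_real_mult complex_norm_square .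
  then have e2_norm: "(cmod e2)\<^sup>2 * Y0 = c * Y1"
    by (simp only: of_real_eq_iff)
  have "e2 \<noteq> 0" "c > 0"
    using eE_of_real_neg_index_nonzero[OF neg] neg by (auto simp: e2_def c_def)
  have "cmod e2 \<noteq> 0"
    using \<open>e2 \<noteq> 0\<close> by simp
  have Y1: "Y1 = (cmod e2)\<^sup>2 * Y0 / c"
    using e2_norm \<open>c > 0\<close> by (simp add: field_simps)
  have k: "n0 + int (Suc j) = k" "n0 + int j = k - 1"
    by (simp_all add: k_def)
  have diag_Suc: "diag_norm a1 a2 a (hw_vector a1 a2 a n0) n0 (Suc j) = (cmod (- e1 / e2 * h))\<^sup>2 * X1 * Y1"
    and diag: "diag_norm a1 a2 a (hw_vector a1 a2 a n0) n0 j = (cmod h)\<^sup>2 * X0 * Y0"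
    unfolding diag_norm_def hw_vector_diag hw_coeff.simps(2)
    unfolding k e1_def e2_def h_def X0_def X1_def Y0_def Y1_def by simp_all
  have "diag_norm a1 a2 a (hw_vector a1 a2 a n0) n0 (Suc j)
      = (cmod h)\<^sup>2 * ((cmod e1)\<^sup>2 * X1) * Y1 / (cmod e2)\<^sup>2"
    unfolding diag_Suc by (simp add: norm_mult norm_divide power_mult_distrib power_divide)
  also have "\<dots> = (cmod h)\<^sup>2 * (Q * X0) * ((cmod e2)\<^sup>2 * Y0 / c) / (cmod e2)\<^sup>2"
    unfolding e1_norm Y1 ..
  also have "\<dots> = (cmod h)\<^sup>2 * X0 * Y0 * Q / c"
    using \<open>cmod e2 \<noteq> 0\<close> by (simp add: field_simps)
  finally show ?thesis
    unfolding diag Q_def c_def k_def .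
qed

lemma diag_norm_hw_vector:
  "diag_norm a1 a2 a (hw_vector a1 a2 a n0) n0 j =
     Re (xnorm2 a1 a2 n0) * (\<Prod>i<j. Re (ladder_prod a1 a2 (n0 + int i + 1))) / (fact j * pochhammer (- a) j)"
proof (induction j)
  case 0
  then show ?case
    by (simp add: diag_norm_def hw_vector_def)
next
  case (Suc j)
  have poch: "pochhammer (- a) (Suc j) = pochhammer (- a) j * (real j - a)"
    by (simp add: pochhammer_Suc)
  show ?case
    unfolding diag_norm_hw_vector_Suc Suc poch by (simp add: field_simps)
qed

lemma summable_diag_norm_hw_vector_iff:
  "summable (diag_norm a1 a2 a (hw_vector a1 a2 a n0) n0) \<longleftrightarrow> 2 * real_of_int n0 + Re a1 - Re a2 + a < -1"
proof -
  define P where "P j = (\<Prod>i<j. Re (ladder_prod a1 a2 (n0 + int i + 1)))" for j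
  have ladder_shift: "Re (ladder_prod a1 a2 (n0 + int i + 1)) > 0"
    "ladder_prod a1 a2 (n0 + int i + 1) = of_real (Re (ladder_prod a1 a2 (n0 + int i + 1)))" for i
    using ladder_prod_admissible(2) ladder_prod_admissible_eq_of_real Kset_n0_add[of i] admissible
    by simp_all
  have P_pos: "P j > 0" for j
    unfolding P_def using ladder_shift by (intro prod_pos) auto
  have "complex_of_real (P j) = (\<Prod>i<j. ladder_prod a1 a2 (n0 + int i + 1))" for j
    unfolding P_def of_real_prod using ladder_shift by simp
  also have "\<dots> j = pochhammer (of_int n0 - a2) j * pochhammer (of_int n0 + 1 + a1) j" for j
    unfolding pochhammer_prod ladder_prod_def atLeast0LessThan prod.distrib[symmetric]
    by (intro prod.cong refl) (simp add: algebra_simps)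
  finally have P_eq: "complex_of_real (P j) = pochhammer (of_int n0 - a2) j * pochhammer (of_int n0 + 1 + a1) j"
    for j .
  then have P_norm: "P j = cmod (pochhammer (of_int n0 - a2) j) * cmod (pochhammer (of_int n0 + 1 + a1) j)" for j
    by (metis P_pos norm_mult norm_of_real abs_of_pos)
  have not_nonpos_Int: "z \<notin> \<int>\<^sub>\<le>\<^sub>0" if "\<And>j. pochhammer z j \<noteq> 0" for z :: complex
    using that by (auto elim!: nonpos_Ints_cases' simp: pochhammer_eq_0_iff)
  have "pochhammer (of_int n0 - a2) j \<noteq> 0 \<and> pochhammer (of_int n0 + 1 + a1) j \<noteq> 0" for j
    using P_eq[of j] P_pos[of j] by (metis mult_zero_left mult_zero_right of_real_eq_0_iff less_irrefl)
  then have "summable (\<lambda>j. Re (xnorm2 a1 a2 n0) * cmod (pochhammer (of_int n0 - a2) j)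
        * cmod (pochhammer (of_int n0 + 1 + a1) j) / (fact j * pochhammer (- a) j))
      \<longleftrightarrow> Re (of_int n0 - a2) + Re (of_int n0 + 1 + a1) < - a"
    using neg xnorm2_admissible_pos[OF admissible n0_in_Kset]
    by (intro summable_pochhammer_quotient_iff not_nonpos_Int) auto
  moreover have "diag_norm a1 a2 a (hw_vector a1 a2 a n0) n0 = (\<lambda>j. Re (xnorm2 a1 a2 n0)
      * cmod (pochhammer (of_int n0 - a2) j) * cmod (pochhammer (of_int n0 + 1 + a1) j) / (fact j * pochhammer (- a) j))"
    by (auto simp: diag_norm_hw_vector P_norm[symmetric] P_def fun_eq_iff)
  ultimately show ?thesis
    by (simp add: algebra_simps)
qed

end

lemma weight_vector_eq_on_antidiagonal:
  assumes "a < 0" "v \<in> FS a1 a2 a" "tH a1 a2 a v = (\<lambda>p. (a1 - a2 + of_real a + 2 * of_int n0) * v p)"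
  shows "v (k, m) = (if k + m = n0 \<and> m \<le> 0 then v (n0 + int (nat (- m)), - int (nat (- m))) else 0)"
proof (cases "k + m = n0 \<and> m \<le> 0")
  case True
  define j where "j = nat (- m)"
  have k: "k = n0 + int j" and m: "m = - int j"
    using True by (simp_all add: j_def)
  show ?thesis
    unfolding k m by simp
next
  case False
  then have "m \<notin> Kset (of_real a) 0 \<or> k + m \<noteq> n0"
    using assms(1) by (auto simp: Kset_of_real_neg)
  then show ?thesis
    using False FS_eq_0[OF assms(2)] weight_vector_antidiagonal[OF assms(2,3)] by auto
qed

lemma tE_eq_0_recursion:
  assumes "a < 0" "tE a1 a2 a v = (\<lambda>p. 0)"
  shows "eE (of_real a) 0 (- int j - 1) * v (n0 + int j + 1, - int j - 1) =
      - (if n0 + int j + 1 \<in> Kset a1 a2 then eE a1 a2 (n0 + int j) * v (n0 + int j, - int j) else 0)"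
proof -
  have "n0 + int j + 1 - 1 = n0 + int j"
    by simp
  then have "tE a1 a2 a v (n0 + int j + 1, - int j) =
      (if n0 + int j + 1 \<in> Kset a1 a2 then eE a1 a2 (n0 + int j) * v (n0 + int j, - int j) else 0) +
      eE (of_real a) 0 (- int j - 1) * v (n0 + int j + 1, - int j - 1)"
    unfolding tE_apply using assms(1) by (simp add: Kset_of_real_neg)
  then show ?thesis
    using assms(2) by (simp add: eq_neg_iff_add_eq_0 add.commute)
qed

lemma highest_weight_vector_unique:
  assumes admissible: "admissible a1 a2" and neg: "a < 0" and v: "v \<in> FS a1 a2 a"
    and E: "tE a1 a2 a v = (\<lambda>p. 0)"
    and H: "tH a1 a2 a v = (\<lambda>p. (a1 - a2 + of_real a + 2 * of_int n0) * v p)"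
    and nonzero: "v \<noteq> (\<lambda>p. 0)"
  shows "n0 \<in> Kset a1 a2" "v (n0, 0) \<noteq> 0" "v = (\<lambda>p. v (n0, 0) * hw_vector a1 a2 a n0 p)"
proof -
  define \<omega> where "\<omega> j = v (n0 + int j, - int j)" for j
  have on_diag: "v (k, m) = (if k + m = n0 \<and> m \<le> 0 then \<omega> (nat (- m)) else 0)" for k m
    unfolding \<omega>_def by (rule weight_vector_eq_on_antidiagonal[OF neg v H])
  have "n0 + int (Suc j) = n0 + int j + 1" "- int (Suc j) = - int j - 1" for j
    by simp_all
  then have rec: "eE (of_real a) 0 (- int j - 1) * \<omega> (Suc j) =
      - (if n0 + int j + 1 \<in> Kset a1 a2 then eE a1 a2 (n0 + int j) * \<omega> j else 0)" for j
    unfolding \<omega>_def using tE_eq_0_recursion[OF neg E] by (simp only:)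
  have "\<omega> 0 \<noteq> 0"
  proof
    assume "\<omega> 0 = 0"
    have "\<omega> j = 0" for j
    proof (induction j)
      case (Suc j)
      then have "eE (of_real a) 0 (- int j - 1) * \<omega> (Suc j) = 0"
        using rec[of j] by simp
      then show ?case
        using eE_of_real_neg_index_nonzero[OF neg, of j] by simp
    qed (fact \<open>\<omega> 0 = 0\<close>)
    then have "v = (\<lambda>p. 0)"
      using on_diag by (auto simp: fun_eq_iff)
    with nonzero show False
      by simp
  qed
  then show "v (n0, 0) \<noteq> 0"
    by (simp add: \<omega>_def)
  then show n0_in: "n0 \<in> Kset a1 a2"
    using v unfolding FS_def by blast
  have coeff: "\<omega> j = \<omega> 0 * hw_coeff a1 a2 a n0 j" for j
  proof (induction j)
    case (Suc j)
    have "n0 + int j + 1 \<in> Kset a1 a2"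
      using Kset_admissible_add[OF admissible n0_in, of "Suc j"] by (simp add: ac_simps)
    then have "\<omega> (Suc j) = - eE a1 a2 (n0 + int j) / eE (of_real a) 0 (- int j - 1) * \<omega> j"
      using rec[of j] eE_of_real_neg_index_nonzero[OF neg, of j] by (simp add: field_simps)
    then show ?case
      unfolding Suc by simp
  qed simp
  show "v = (\<lambda>p. v (n0, 0) * hw_vector a1 a2 a n0 p)"
  proof
    fix p :: "int \<times> int"
    obtain k m where p: "p = (k, m)"
      by (cases p)
    have "v (n0, 0) = \<omega> 0"
      by (simp add: \<omega>_def)
    then show "v p = v (n0, 0) * hw_vector a1 a2 a n0 p"
      unfolding p hw_vector_def using on_diag[of k m] coeff[of "nat (- m)"] by simp
  qed
qed

lemma hilb_sub_necessary:
  assumes "admissible a1 a2" "a < 0" "hilb_sub (a1 + of_real a - a2 + 2 * of_int n0) a1 a2 a"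
  shows "n0 \<in> Kset a1 a2" "2 * real_of_int n0 + Re a1 - Re a2 + a < -1"
proof -
  obtain v where v: "v \<in> FS a1 a2 a" "tE a1 a2 a v = (\<lambda>p. 0)"
    "tH a1 a2 a v = (\<lambda>p. (a1 + of_real a - a2 + 2 * of_int n0) * v p)" "v \<noteq> (\<lambda>p. 0)" "inV a1 a2 a v"
    using hilb_sub_highest_weight_vector[OF assms(3)] by blast
  have H: "tH a1 a2 a v = (\<lambda>p. (a1 - a2 + of_real a + 2 * of_int n0) * v p)"
    unfolding v(3) by (simp add: algebra_simps)
  note unique = highest_weight_vector_unique[OF assms(1,2) v(1,2) H v(4)]
  show n0_in: "n0 \<in> Kset a1 a2"
    by (rule unique(1))
  have "summable (diag_norm a1 a2 a v n0)"
    using inV_iff_summable_diag_norm[OF assms(1,2) v(1)] weight_vector_antidiagonal[OF v(1) H] v(5)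
    by blast
  moreover have "diag_norm a1 a2 a v n0 = diag_norm a1 a2 a (\<lambda>p. v (n0, 0) * hw_vector a1 a2 a n0 p) n0"
    using unique(3) by (rule arg_cong)
  ultimately have "summable (diag_norm a1 a2 a (hw_vector a1 a2 a n0) n0)"
    using unique(2) by (simp add: diag_norm_scale)
  then show "2 * real_of_int n0 + Re a1 - Re a2 + a < -1"
    using summable_diag_norm_hw_vector_iff[OF assms(1,2) n0_in] by blast
qed

section \<open>Lowering preserves square summability\<close>

context
  fixes a1 a2 :: complex and a :: real and w :: "int \<times> int \<Rightarrow> complex" and d :: int
  assumes admissible: "admissible a1 a2" and neg: "a < 0" and w_in_FS: "w \<in> FS a1 a2 a"
    and antidiagonal: "\<And>k m. w (k, m) \<noteq> 0 \<Longrightarrow> k + m = d"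
begin

lemma w_nonzero_Kset: "w (k, m) \<noteq> 0 \<Longrightarrow> k \<in> Kset a1 a2"
  using w_in_FS unfolding FS_def by blast

lemma eF_lower_boundary:
  assumes "k \<in> Kset a1 a2"
  shows "(if k - 1 \<in> Kset a1 a2 then eF a1 a2 k else 0) = eF a1 a2 k"
  using Kset_admissible_boundary(1)[OF admissible assms] by simp

lemma w_eq_0_at_1: "w (k, 1) = 0"
  using w_in_FS neg unfolding FS_def by (auto simp: Kset_of_real_neg)

lemma diag_norm_tF_0:
  "diag_norm a1 a2 a (tF a1 a2 a w) (d - 1) 0 = Re (ladder_prod a1 a2 d) * diag_norm a1 a2 a w d 0"
proof (cases "w (d, 0) = 0")
  case False
  then have d: "d \<in> Kset a1 a2"
    by (rule w_nonzero_Kset)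
  have "tF a1 a2 a w (d - 1, 0) = (if d - 1 \<in> Kset a1 a2 then eF a1 a2 d else 0) * w (d, 0)"
    by (simp add: tF_apply w_eq_0_at_1)
  then have F: "tF a1 a2 a w (d - 1, 0) = eF a1 a2 d * w (d, 0)"
    unfolding eF_lower_boundary[OF d] .
  have "complex_of_real ((cmod (tF a1 a2 a w (d - 1, 0)))\<^sup>2 * Re (xnorm2 a1 a2 (d - 1)))
      = eF a1 a2 d * cnj (eF a1 a2 d) * of_real (Re (xnorm2 a1 a2 (d - 1))) * (w (d, 0) * cnj (w (d, 0)))"
    unfolding F of_real_mult complex_norm_square by (simp add: algebra_simps)
  also have "\<dots> = complex_of_real (Re (ladder_prod a1 a2 d) * ((cmod (w (d, 0)))\<^sup>2 * Re (xnorm2 a1 a2 d)))"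
    unfolding eF_norm_xnorm2[OF admissible d] of_real_mult complex_norm_square by (simp add: algebra_simps)
  finally show ?thesis
    by (simp only: of_real_eq_iff diag_norm_def) simp
qed (simp add: diag_norm_def tF_apply w_eq_0_at_1)

lemma diag_norm_tF_Suc:
  "diag_norm a1 a2 a (tF a1 a2 a w) (d - 1) (Suc i) = diag_norm a1 a2 a (tE a1 a2 a w) (d + 1) i
   + (Re (ladder_prod a1 a2 (d + int i + 1)) - (real i + 1) * (real i - a))
     * (diag_norm a1 a2 a w d (Suc i) - diag_norm a1 a2 a w d i)"
proof -
  define k where "k = d + int i + 1"
  have k: "d + int i = k - 1" "d + 1 + int i = k" "d + int (Suc i) = k" "d - 1 + int (Suc i) = k - 1"
    "- int (Suc i) = - int i - 1" "- int i - 1 + 1 = - int i"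
    by (simp_all add: k_def)
  define w1 w0 where "w1 = w (k, - int i - 1)" and "w0 = w (k - 1, - int i)"
  define A where "A = (if k - 1 \<in> Kset a1 a2 then eF a1 a2 k else 0)"
  define C where "C = (if k \<in> Kset a1 a2 then eE a1 a2 (k - 1) else 0)"
  define B where "B = eF (of_real a) 0 (- int i)"
  define D where "D = eE (of_real a) 0 (- int i - 1)"
  define X0 X1 where "X0 = complex_of_real (Re (xnorm2 a1 a2 (k - 1)))"
    and "X1 = complex_of_real (Re (xnorm2 a1 a2 k))"
  define Y0 Y1 where "Y0 = complex_of_real (ynorm2 a i)" and "Y1 = complex_of_real (ynorm2 a (Suc i))"
  define q where "q = complex_of_real (Re (ladder_prod a1 a2 k))"
  define c where "c = complex_of_real ((real i + 1) * (real i - a))"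
  have "- int i - 1 \<in> Kset (of_real a) 0" "- int i \<in> Kset (of_real a) 0"
    using neg by (auto simp: Kset_of_real_neg)
  then have tF: "tF a1 a2 a w (k - 1, - int i - 1) = A * w1 + B * w0"
    and tE: "tE a1 a2 a w (k, - int i) = C * w0 + D * w1"
    unfolding tF_apply tE_apply A_def B_def C_def D_def w1_def w0_def by simp_all
  have Y_adjoint: "Y1 * cnj B = - D * Y0" "Y1 * B = - cnj D * Y0"
    unfolding Y1_def Y0_def B_def D_def by (rule ynorm2_adjoint[OF neg] ynorm2_adjoint_cnj[OF neg])+
  have X_adjoint: "cnj A * X0 = - C * X1" "A * X0 = - cnj C * X1" if "k - 1 \<in> Kset a1 a2"
  proof -
    have "k \<in> Kset a1 a2"
      using Kset_admissible_add[OF admissible that, of 1] by simp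
    then show "cnj A * X0 = - C * X1" "A * X0 = - cnj C * X1"
      using xnorm2_adjoint[OF admissible _ that] xnorm2_adjoint_cnj[OF admissible _ that] that
      unfolding A_def C_def X0_def X1_def by simp_all
  qed
  have "A * cnj A * X0 * w1 = q * X1 * w1"
  proof (cases "w1 = 0")
    case False
    then have "k \<in> Kset a1 a2"
      unfolding w1_def by (rule w_nonzero_Kset)
    then show ?thesis
      using eF_norm_xnorm2[OF admissible] eF_lower_boundary
      unfolding A_def X0_def X1_def q_def by simp
  qed simp
  moreover have "C * cnj C * X1 * w0 = q * X0 * w0"
  proof (cases "w0 = 0")
    case False
    then have "k - 1 \<in> Kset a1 a2"
      unfolding w0_def by (rule w_nonzero_Kset)
    moreover from this have "k \<in> Kset a1 a2"
      using Kset_admissible_add[OF admissible, of "k - 1" 1] by simp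
    ultimately show ?thesis
      using eE_norm_xnorm2[OF admissible] unfolding C_def X0_def X1_def q_def by simp
  qed simp
  moreover have "B * cnj B * Y1 = c * Y0" "D * cnj D * Y0 = c * Y1"
    using eF_norm_ynorm2[OF neg, of i] eE_norm_ynorm2[OF neg, of i]
    unfolding B_def D_def Y0_def Y1_def c_def by simp_all
  moreover have "A * cnj B * X0 * Y1 * w1 * cnj w0 = cnj C * D * X1 * Y0 * w1 * cnj w0"
    "cnj A * B * X0 * Y1 * w0 * cnj w1 = C * cnj D * X1 * Y0 * w0 * cnj w1"
  proof -
    have "A * cnj B * X0 * Y1 = cnj C * D * X1 * Y0" "cnj A * B * X0 * Y1 = C * cnj D * X1 * Y0"
      if "k - 1 \<in> Kset a1 a2"
    proof -
      have "A * cnj B * X0 * Y1 = (A * X0) * (Y1 * cnj B)" "cnj A * B * X0 * Y1 = (cnj A * X0) * (Y1 * B)"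
        by (simp_all add: ac_simps)
      then show "A * cnj B * X0 * Y1 = cnj C * D * X1 * Y0" "cnj A * B * X0 * Y1 = C * cnj D * X1 * Y0"
        unfolding X_adjoint[OF that] Y_adjoint by (simp_all add: ac_simps)
    qed
    moreover have "k - 1 \<in> Kset a1 a2" if "w0 \<noteq> 0"
      using that unfolding w0_def by (rule w_nonzero_Kset)
    ultimately show "A * cnj B * X0 * Y1 * w1 * cnj w0 = cnj C * D * X1 * Y0 * w1 * cnj w0"
      "cnj A * B * X0 * Y1 * w0 * cnj w1 = C * cnj D * X1 * Y0 * w0 * cnj w1"
      by (cases "w0 = 0"; simp)+
  qed
  ultimately have identity: "(A * w1 + B * w0) * cnj (A * w1 + B * w0) * X0 * Y1
      = (C * w0 + D * w1) * cnj (C * w0 + D * w1) * X1 * Y0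
        + (q - c) * (w1 * cnj w1 * X1 * Y1 - w0 * cnj w0 * X0 * Y0)"
    by (rule norm_sq_exchange_identity)
  have "complex_of_real (diag_norm a1 a2 a (tF a1 a2 a w) (d - 1) (Suc i)) =
     complex_of_real (diag_norm a1 a2 a (tE a1 a2 a w) (d + 1) i
   + (Re (ladder_prod a1 a2 k) - (real i + 1) * (real i - a))
     * (diag_norm a1 a2 a w d (Suc i) - diag_norm a1 a2 a w d i))"
    unfolding diag_norm_def k tF tE w1_def[symmetric] w0_def[symmetric]
      of_real_add of_real_mult of_real_diff complex_norm_square
    using identity unfolding X0_def X1_def Y0_def Y1_def q_def c_def by (simp add: algebra_simps)
  then show ?thesis
    unfolding k_def by (simp only: of_real_eq_iff)
qed

lemma partial_sum_diag_norm_tF: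
  "(\<Sum>j<Suc J. diag_norm a1 a2 a (tF a1 a2 a w) (d - 1) j) =
     (\<Sum>j<J. diag_norm a1 a2 a (tE a1 a2 a w) (d + 1) j)
     + (Re (ladder_prod a1 a2 (d + int J)) - real J * (real J - 1 - a)) * diag_norm a1 a2 a w d J
     - (2 * real_of_int d + Re a1 - Re a2 + a) * (\<Sum>j<J. diag_norm a1 a2 a w d j)"
proof (induction J)
  case 0
  then show ?case
    using diag_norm_tF_0 by simp
next
  case (Suc J)
  define g where "g J = Re (ladder_prod a1 a2 (d + int J)) - real J * (real J - 1 - a)" for J
  define \<mu> where "\<mu> = 2 * real_of_int d + Re a1 - Re a2 + a"
  have "d + int J + 1 = d + int (Suc J)"
    by simp
  then have "diag_norm a1 a2 a (tF a1 a2 a w) (d - 1) (Suc J) = diag_norm a1 a2 a (tE a1 a2 a w) (d + 1) J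
      + g (Suc J) * (diag_norm a1 a2 a w d (Suc J) - diag_norm a1 a2 a w d J)"
    using diag_norm_tF_Suc[of J] by (simp add: g_def algebra_simps)
  moreover have "g (Suc J) = g J + \<mu>"
    by (simp add: g_def \<mu>_def ladder_prod_def algebra_simps)
  ultimately show ?case
    using Suc unfolding g_def[symmetric] \<mu>_def[symmetric] by (simp add: algebra_simps)
qed

lemma summable_diag_norm_tF:
  assumes "summable (diag_norm a1 a2 a w d)" "summable (diag_norm a1 a2 a (tE a1 a2 a w) (d + 1))"
  shows "summable (diag_norm a1 a2 a (tF a1 a2 a w) (d - 1))"
proof -
  define \<mu> where "\<mu> = 2 * real_of_int d + Re a1 - Re a2 + a"
  define g where "g J = Re (ladder_prod a1 a2 (d + int J)) - real J * (real J - 1 - a)" for J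
  have "g J = \<mu> * real J + g 0" for J
    unfolding g_def \<mu>_def by (simp add: ladder_prod_def algebra_simps)
  then have "\<bar>g J\<bar> \<le> \<bar>\<mu>\<bar> * real J + \<bar>g 0\<bar>" for J
    by (metis abs_mult abs_of_nat abs_triangle_ineq)
  moreover have "diag_norm a1 a2 a (tF a1 a2 a w) (d - 1) j \<ge> 0"
    "diag_norm a1 a2 a (tE a1 a2 a w) (d + 1) j \<ge> 0" "diag_norm a1 a2 a w d j \<ge> 0" for j
    using diag_norm_nonneg[OF admissible neg] tF_in_FS tE_in_FS w_in_FS by blast+
  ultimately show ?thesis
    using summable_if_partial_sums_bounded_by[OF _ _ _ assms(2,1), of _ g \<mu> "\<bar>\<mu>\<bar>" "\<bar>g 0\<bar>"]
      partial_sum_diag_norm_tF unfolding g_def \<mu>_def by simp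
qed

end

section \<open>A square summable highest weight vector generates a Hilbert submodule\<close>

text \<open>\<open>descendant \<dots> n\<close> is the image of \<open>x(-n)\<close>: the normalisation matches \<open>F x(-n) = eF l 0 (-n) x(-n-1)\<close>
  in \<open>N(l,0)\<close>.\<close>

primrec descendant :: "complex \<Rightarrow> complex \<Rightarrow> real \<Rightarrow> real \<Rightarrow> (int \<times> int \<Rightarrow> complex) \<Rightarrow> nat \<Rightarrow> int \<times> int \<Rightarrow> complex"
  where
    "descendant a1 a2 a l u 0 = u"
  | "descendant a1 a2 a l u (Suc n) =
       (\<lambda>p. inverse (eF (of_real l) 0 (- int n)) * tF a1 a2 a (descendant a1 a2 a l u n) p)"

locale highest_weight_vector =
  fixes a1 a2 :: complex and a l :: real and u :: "int \<times> int \<Rightarrow> complex"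
  assumes u_in_FS: "u \<in> FS a1 a2 a"
    and tE_u: "tE a1 a2 a u = (\<lambda>p. 0)"
    and tH_u: "tH a1 a2 a u = (\<lambda>p. of_real l * u p)"
    and l_neg: "l < 0"
    and u_nonzero: "u \<noteq> (\<lambda>p. 0)"
begin

abbreviation desc :: "nat \<Rightarrow> int \<times> int \<Rightarrow> complex" where
  "desc \<equiv> descendant a1 a2 a l u"

lemma desc_in_FS: "desc n \<in> FS a1 a2 a"
proof (induction n)
  case (Suc n)
  then show ?case
    using tF_in_FS[OF Suc] unfolding FS_def by auto
qed (simp add: u_in_FS)

lemma tF_desc: "tF a1 a2 a (desc n) = (\<lambda>p. eF (of_real l) 0 (- int n) * desc (Suc n) p)"
  using eF_of_real_neg_index_nonzero[OF l_neg, of n] by (simp add: field_simps)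

lemma tH_desc: "tH a1 a2 a (desc n) = (\<lambda>p. (of_real l - 2 * of_nat n) * desc n p)"
proof (induction n)
  case (Suc n)
  have "tH a1 a2 a (desc (Suc n)) p
      = inverse (eF (of_real l) 0 (- int n)) * (tF a1 a2 a (tH a1 a2 a (desc n)) p - 2 * tF a1 a2 a (desc n) p)"
    for p
    by (simp add: tH_scale tH_tF_commutator[OF desc_in_FS])
  then show ?case
    unfolding Suc tF_scale by (auto simp: algebra_simps)
qed (simp add: tH_u)

lemma tE_desc: "tE a1 a2 a (desc (Suc n)) = (\<lambda>p. eE (of_real l) 0 (- int n - 1) * desc n p)"
proof (induction n)
  case 0
  have "eE (of_real l) 0 (- 1) * eF (of_real l) 0 0 = of_real l"
    using eE_eF_of_real_neg[OF l_neg, of 0] by simp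
  then have "inverse (eF (of_real l) 0 0) * of_real l = eE (of_real l) 0 (- 1)"
    using eF_of_real_neg_index_nonzero[OF l_neg, of 0] by (simp add: field_simps)
  moreover have "tE a1 a2 a (tF a1 a2 a u) p = of_real l * u p" for p
    using tE_tF_commutator[of a1 a2 a u p] by (simp add: tE_u tH_u)
  ultimately show ?case
    by (simp add: tE_scale mult.assoc[symmetric])
next
  case (Suc n)
  let ?e = "eE (of_real l) 0" and ?f = "eF (of_real l) 0"
  have "tE a1 a2 a (desc (Suc (Suc n))) p
      = inverse (?f (- int (Suc n))) * tE a1 a2 a (tF a1 a2 a (desc (Suc n))) p" for p
    by (simp add: tE_scale)
  also have "\<dots> p = inverse (?f (- int (Suc n)))
      * (tF a1 a2 a (tE a1 a2 a (desc (Suc n))) p + tH a1 a2 a (desc (Suc n)) p)" for p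
    using tE_tF_commutator[of a1 a2 a "desc (Suc n)" p] by (simp add: algebra_simps)
  also have "\<dots> p = inverse (?f (- int (Suc n)))
      * (?e (- int n - 1) * ?f (- int n) + (of_real l - 2 * of_nat (Suc n))) * desc (Suc n) p" for p
    unfolding Suc tF_scale tH_desc tF_desc by (simp add: algebra_simps)
  also have "\<dots> p = ?e (- int (Suc n) - 1) * desc (Suc n) p" for p
  proof -
    have "?e (- int n - 1) * ?f (- int n) + (of_real l - 2 * of_nat (Suc n))
        = ?e (- int (Suc n) - 1) * ?f (- int (Suc n))"
      using l_neg by (auto simp: eE_of_real_neg eF_of_real_neg algebra_simps)
    then show ?thesis
      using eF_of_real_neg_index_nonzero[OF l_neg, of "Suc n"] by (simp add: field_simps)
  qed
  finally show ?case
    by auto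
qed

lemma desc_nonzero: "desc n \<noteq> (\<lambda>p. 0)"
proof (induction n)
  case (Suc n)
  show ?case
  proof
    assume "desc (Suc n) = (\<lambda>p. 0)"
    then have "\<forall>p. eE (of_real l) 0 (- int n - 1) * desc n p = 0"
      using tE_desc[of n] by (metis tE_zero)
    then have "desc n = (\<lambda>p. 0)"
      using eE_of_real_neg_index_nonzero[OF l_neg, of n] by auto
    with Suc show False
      by simp
  qed
qed (simp add: u_nonzero)

lemma desc_disjoint: "desc n p \<noteq> 0 \<Longrightarrow> desc n' p \<noteq> 0 \<Longrightarrow> n = n'"
proof -
  assume "desc n p \<noteq> 0" "desc n' p \<noteq> 0"
  moreover obtain k m where "p = (k, m)"
    by (cases p)
  ultimately have "of_real l - 2 * of_nat n = a1 - a2 + of_real a + 2 * of_int (k + m)"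
    "of_real l - 2 * of_nat n' = a1 - a2 + of_real a + 2 * of_int (k + m)"
    using weight_eq_if_nonzero[OF desc_in_FS tH_desc] by blast+
  then have "complex_of_real l - 2 * of_nat n = complex_of_real l - 2 * of_nat n'"
    by (simp only:)
  then have "(of_nat (2 * n) :: complex) = of_nat (2 * n')"
    by simp
  then show "n = n'"
    by simp
qed

definition embedding :: "(int \<Rightarrow> complex) \<Rightarrow> int \<times> int \<Rightarrow> complex" where
  "embedding v = (\<lambda>p. \<Sum>k\<in>{k. v k \<noteq> 0}. v k * desc (nat (- k)) p)"

lemma embedding_eq_sum:
  assumes "finite S" "{k. v k \<noteq> 0} \<subseteq> S"
  shows "embedding v p = (\<Sum>k\<in>S. v k * desc (nat (- k)) p)"
  unfolding embedding_def using assms by (intro sum.mono_neutral_left) auto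

lemma Nel_of_real_neg: "v \<in> Nel (of_real l) 0 \<longleftrightarrow> finite {k. v k \<noteq> 0} \<and> (\<forall>k. v k \<noteq> 0 \<longrightarrow> k \<le> 0)"
  unfolding Nel_def Kset_of_real_neg[OF l_neg] by auto

lemma embedding_add:
  assumes "v \<in> Nel (of_real l) 0" "w \<in> Nel (of_real l) 0"
  shows "embedding (\<lambda>k. v k + w k) = (\<lambda>p. embedding v p + embedding w p)"
proof
  fix p
  define S where "S = {k. v k \<noteq> 0} \<union> {k. w k \<noteq> 0}"
  have "finite S"
    using assms unfolding S_def Nel_of_real_neg by auto
  moreover have "{k. v k \<noteq> 0} \<subseteq> S" "{k. w k \<noteq> 0} \<subseteq> S" "{k. v k + w k \<noteq> 0} \<subseteq> S"
    unfolding S_def by auto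
  ultimately show "embedding (\<lambda>k. v k + w k) p = embedding v p + embedding w p"
    by (simp add: embedding_eq_sum sum.distrib algebra_simps)
qed

lemma embedding_scale:
  assumes "v \<in> Nel (of_real l) 0"
  shows "embedding (\<lambda>k. c * v k) = (\<lambda>p. c * embedding v p)"
proof
  fix p
  define S where "S = {k. v k \<noteq> 0}"
  have "finite S"
    using assms unfolding S_def Nel_of_real_neg by auto
  then show "embedding (\<lambda>k. c * v k) p = c * embedding v p"
    using embedding_eq_sum[of S v p] embedding_eq_sum[of S "\<lambda>k. c * v k" p]
    by (auto simp: S_def sum_distrib_left algebra_simps)
qed

lemma embedding_in_FS: "embedding v \<in> FS a1 a2 a"
  using desc_in_FS unfolding FS_def embedding_def by auto

lemma embedding_actF:
  assumes "v \<in> Nel (of_real l) 0"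
  shows "embedding (actF (of_real l) 0 v) = tF a1 a2 a (embedding v)"
proof
  fix p
  define S where "S = {k. v k \<noteq> 0}"
  have S: "finite S" "\<And>k. k \<in> S \<Longrightarrow> k \<le> 0"
    using assms unfolding S_def Nel_of_real_neg by auto
  have act: "actF (of_real l) 0 v k = (if k \<le> 0 then eF (of_real l) 0 (k + 1) * v (k + 1) else 0)" for k
    unfolding actF_def Kset_of_real_neg[OF l_neg] by simp
  have "{k. actF (of_real l) 0 v k \<noteq> 0} \<subseteq> (\<lambda>k. k - 1) ` S"
  proof
    fix k
    assume "k \<in> {k. actF (of_real l) 0 v k \<noteq> 0}"
    then have "k + 1 \<in> S"
      unfolding act S_def by (auto split: if_splits)
    then show "k \<in> (\<lambda>k. k - 1) ` S"
      by (intro image_eqI[of _ _ "k + 1"]) auto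
  qed
  then have "embedding (actF (of_real l) 0 v) p
      = (\<Sum>k\<in>(\<lambda>k. k - 1) ` S. actF (of_real l) 0 v k * desc (nat (- k)) p)"
    using S by (intro embedding_eq_sum) auto
  also have "\<dots> = (\<Sum>k\<in>S. actF (of_real l) 0 v (k - 1) * desc (nat (- (k - 1))) p)"
    by (subst sum.reindex) (auto simp: inj_on_def)
  also have "\<dots> = (\<Sum>k\<in>S. v k * tF a1 a2 a (desc (nat (- k))) p)"
  proof (rule sum.cong[OF refl])
    fix k
    assume "k \<in> S"
    then have "k \<le> 0"
      by (rule S(2))
    then have "nat (- (k - 1)) = Suc (nat (- k))" "- int (nat (- k)) = k"
      by auto
    with \<open>k \<le> 0\<close> show "actF (of_real l) 0 v (k - 1) * desc (nat (- (k - 1))) p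
        = v k * tF a1 a2 a (desc (nat (- k))) p"
      unfolding tF_desc act by simp
  qed
  also have "\<dots> = tF a1 a2 a (embedding v) p"
    unfolding embedding_def S_def tF_sum by (simp add: tF_scale)
  finally show "embedding (actF (of_real l) 0 v) p = tF a1 a2 a (embedding v) p" .
qed

lemma tE_desc_nat: "tE a1 a2 a (desc n) p = (if n = 0 then 0 else eE (of_real l) 0 (- int n) * desc (n - 1) p)"
proof (cases n)
  case (Suc m)
  have "- int n = - int m - 1" "n - 1 = m" "n \<noteq> 0"
    using Suc by simp_all
  then have "(if n = 0 then 0 else eE (of_real l) 0 (- int n) * desc (n - 1) p)
      = eE (of_real l) 0 (- int m - 1) * desc m p"
    by (simp only: if_False)
  then show ?thesis
    using tE_desc[of m] by (simp only: Suc)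
qed (simp add: tE_u)

lemma embedding_actE:
  assumes "v \<in> Nel (of_real l) 0"
  shows "embedding (actE (of_real l) 0 v) = tE a1 a2 a (embedding v)"
proof
  fix p
  define S where "S = {k. v k \<noteq> 0}"
  have S: "finite S" "\<And>k. k \<in> S \<Longrightarrow> k \<le> 0"
    using assms unfolding S_def Nel_of_real_neg by auto
  have act: "actE (of_real l) 0 v k = (if k \<le> 0 then eE (of_real l) 0 (k - 1) * v (k - 1) else 0)" for k
    unfolding actE_def Kset_of_real_neg[OF l_neg] by simp
  have "{k. actE (of_real l) 0 v k \<noteq> 0} \<subseteq> (\<lambda>k. k + 1) ` S"
  proof
    fix k
    assume "k \<in> {k. actE (of_real l) 0 v k \<noteq> 0}"
    then have "k - 1 \<in> S"
      unfolding act S_def by (auto split: if_splits)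
    then show "k \<in> (\<lambda>k. k + 1) ` S"
      by (intro image_eqI[of _ _ "k - 1"]) auto
  qed
  then have "embedding (actE (of_real l) 0 v) p
      = (\<Sum>k\<in>(\<lambda>k. k + 1) ` S. actE (of_real l) 0 v k * desc (nat (- k)) p)"
    using S by (intro embedding_eq_sum) auto
  also have "\<dots> = (\<Sum>k\<in>S. actE (of_real l) 0 v (k + 1) * desc (nat (- (k + 1))) p)"
    by (subst sum.reindex) (auto simp: inj_on_def)
  also have "\<dots> = (\<Sum>k\<in>S. v k * tE a1 a2 a (desc (nat (- k))) p)"
  proof (rule sum.cong[OF refl])
    fix k
    assume "k \<in> S"
    then have "k \<le> 0"
      by (rule S(2))
    show "actE (of_real l) 0 v (k + 1) * desc (nat (- (k + 1))) p = v k * tE a1 a2 a (desc (nat (- k))) p"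
    proof (cases "k = 0")
      case False
      with \<open>k \<le> 0\<close> have "nat (- (k + 1)) = nat (- k) - 1" "- int (nat (- k)) = k" "nat (- k) \<noteq> 0"
        by auto
      with \<open>k \<le> 0\<close> False show ?thesis
        unfolding tE_desc_nat act by simp
    qed (simp add: act tE_u)
  qed
  also have "\<dots> = tE a1 a2 a (embedding v) p"
    unfolding embedding_def S_def tE_sum by (simp add: tE_scale)
  finally show "embedding (actE (of_real l) 0 v) p = tE a1 a2 a (embedding v) p" .
qed

lemma embedding_actH:
  assumes "v \<in> Nel (of_real l) 0"
  shows "embedding (actH (of_real l) 0 v) = tH a1 a2 a (embedding v)"
proof
  fix p
  define S where "S = {k. v k \<noteq> 0}"
  have S: "finite S" "\<And>k. k \<in> S \<Longrightarrow> k \<le> 0"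
    using assms unfolding S_def Nel_of_real_neg by auto
  have act: "actH (of_real l) 0 v k = (if k \<le> 0 then hw (of_real l) 0 k * v k else 0)" for k
    unfolding actH_def Kset_of_real_neg[OF l_neg] by simp
  have "{k. actH (of_real l) 0 v k \<noteq> 0} \<subseteq> S"
    unfolding act S_def by auto
  then have "embedding (actH (of_real l) 0 v) p = (\<Sum>k\<in>S. actH (of_real l) 0 v k * desc (nat (- k)) p)"
    using S by (intro embedding_eq_sum) auto
  also have "\<dots> = (\<Sum>k\<in>S. v k * tH a1 a2 a (desc (nat (- k))) p)"
  proof (rule sum.cong[OF refl])
    fix k
    assume "k \<in> S"
    then have "k \<le> 0"
      by (rule S(2))
    then have "of_nat (nat (- k)) = (- of_int k :: complex)"
      by simp
    with \<open>k \<le> 0\<close> show "actH (of_real l) 0 v k * desc (nat (- k)) p = v k * tH a1 a2 a (desc (nat (- k))) p"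
      unfolding tH_desc act by (simp add: hw_def algebra_simps)
  qed
  also have "\<dots> = tH a1 a2 a (embedding v) p"
    unfolding embedding_def S_def tH_sum by (simp add: tH_scale)
  finally show "embedding (actH (of_real l) 0 v) p = tH a1 a2 a (embedding v) p" .
qed

lemma embedding_eq_0:
  assumes "v \<in> Nel (of_real l) 0" "embedding v = (\<lambda>p. 0)"
  shows "v = (\<lambda>k. 0)"
proof (rule ccontr)
  assume "v \<noteq> (\<lambda>k. 0)"
  then obtain k where k: "v k \<noteq> 0"
    by auto
  define S where "S = {k. v k \<noteq> 0}"
  have S: "finite S" "\<And>k. k \<in> S \<Longrightarrow> k \<le> 0" "k \<in> S"
    using assms k unfolding S_def Nel_of_real_neg by auto
  obtain p where p: "desc (nat (- k)) p \<noteq> 0"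
    using desc_nonzero by meson
  have "desc (nat (- j)) p = 0" if "j \<in> S - {k}" for j
  proof -
    have "j \<in> S" "j \<noteq> k"
      using that by auto
    then have "nat (- j) \<noteq> nat (- k)"
      using S(2)[of j] S(2)[OF S(3)] by auto
    then show ?thesis
      using desc_disjoint[of "nat (- j)" p "nat (- k)"] p by auto
  qed
  then have "embedding v p = v k * desc (nat (- k)) p"
    using S by (simp add: embedding_eq_sum[OF S(1)] S_def sum.remove)
  with assms(2) k p show False
    by simp
qed

lemma inj_on_embedding: "inj_on embedding (Nel (of_real l) 0)"
proof (rule inj_onI)
  fix v w
  assume v: "v \<in> Nel (of_real l) 0" and w: "w \<in> Nel (of_real l) 0" and eq: "embedding v = embedding w"
  have minus_w: "(\<lambda>k. (-1) * w k) \<in> Nel (of_real l) 0"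
    using w unfolding Nel_def by auto
  have diff: "(\<lambda>k. v k + (-1) * w k) \<in> Nel (of_real l) 0"
    using v w unfolding Nel_def by (auto intro: finite_subset[of _ "{k. v k \<noteq> 0} \<union> {k. w k \<noteq> 0}"])
  have "embedding (\<lambda>k. v k + (-1) * w k) = (\<lambda>p. 0)"
    using embedding_add[OF v minus_w] embedding_scale[OF w, of "-1"] eq by simp
  then have "(\<lambda>k. v k + (-1) * w k) = (\<lambda>k. 0)"
    by (rule embedding_eq_0[OF diff])
  then show "v = w"
    by (auto simp: fun_eq_iff)
qed

lemma embedding_inV:
  assumes "v \<in> Nel (of_real l) 0" "\<And>n. inV a1 a2 a (desc n)"
  shows "inV a1 a2 a (embedding v)"
proof -
  define S where "S = {k. v k \<noteq> 0}"
  have S: "finite S" "\<And>k. k \<in> S \<Longrightarrow> k \<le> 0"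
    using assms unfolding S_def Nel_of_real_neg by auto
  define N where "N w = (\<lambda>(k, m). (cmod (w (k, m)))\<^sup>2 * Re (xnorm2 a1 a2 k) * ynorm2 a (nat (- m)))" for w
  have "N (embedding v) = (\<lambda>q. \<Sum>j\<in>S. (cmod (v j))\<^sup>2 * N (desc (nat (- j))) q)"
  proof
    fix q :: "int \<times> int"
    obtain k m where q: "q = (k, m)"
      by (cases q)
    have "(cmod (embedding v (k, m)))\<^sup>2 = (\<Sum>j\<in>S. (cmod (v j * desc (nat (- j)) (k, m)))\<^sup>2)"
      unfolding embedding_eq_sum[OF S(1), of v, unfolded S_def, OF order_refl] S_def[symmetric]
    proof (rule norm_sum_sq_disjoint[OF S(1)])
      fix i j
      assume "i \<in> S" "j \<in> S" "i \<noteq> j"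
      then have "nat (- i) \<noteq> nat (- j)"
        using S(2)[of i] S(2)[of j] by auto
      then show "v i * desc (nat (- i)) (k, m) = 0 \<or> v j * desc (nat (- j)) (k, m) = 0"
        using desc_disjoint by auto
    qed
    then show "N (embedding v) q = (\<Sum>j\<in>S. (cmod (v j))\<^sup>2 * N (desc (nat (- j))) q)"
      unfolding q N_def by (simp add: sum_distrib_left sum_distrib_right norm_mult algebra_simps)
  qed
  moreover have "(\<lambda>q. \<Sum>j\<in>S. (cmod (v j))\<^sup>2 * N (desc (nat (- j))) q) summable_on UNIV"
    using assms(2) S(1) unfolding inV_def N_def by (intro summable_on_sum_fun summable_on_cmult_right) auto
  ultimately show ?thesis
    unfolding inV_def N_def using embedding_in_FS by simp
qed

text \<open>The descendants \<open>F\<^sup>n u\<close> of the highest weight vector lie on the antidiagonals \<open>n\<^sub>0 - n\<close>; square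
  summability passes from \<open>F\<^sup>n u\<close> to \<open>F\<^sup>n\<^sup>+\<^sup>1 u\<close> because \<open>E F\<^sup>n\<^sup>+\<^sup>1 u\<close> is a multiple of \<open>F\<^sup>n u\<close>.\<close>

lemma descendants_inV:
  assumes admissible: "admissible a1 a2" and neg: "a < 0"
    and weight: "a1 - a2 + of_real a + 2 * of_int n0 = of_real l"
    and summable_u: "summable (diag_norm a1 a2 a u n0)"
  shows "inV a1 a2 a (desc n)"
proof -
  have antidiagonal: "desc n (k, m) \<noteq> 0 \<Longrightarrow> k + m = n0 - int n" for n k m
  proof -
    assume "desc n (k, m) \<noteq> 0"
    moreover have "tH a1 a2 a (desc n) = (\<lambda>p. (a1 - a2 + of_real a + 2 * of_int (n0 - int n)) * desc n p)"
      unfolding tH_desc weight[symmetric] by (simp add: algebra_simps)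
    ultimately show ?thesis
      using weight_vector_antidiagonal[OF desc_in_FS] by blast
  qed
  have summable_Suc: "summable (diag_norm a1 a2 a (desc (Suc n)) (n0 - int (Suc n)))"
    if "summable (diag_norm a1 a2 a (desc n) (n0 - int n))"
      and "summable (diag_norm a1 a2 a (tE a1 a2 a (desc n)) (n0 - int n + 1))" for n
  proof -
    have "summable (diag_norm a1 a2 a (tF a1 a2 a (desc n)) (n0 - int n - 1))"
      by (rule summable_diag_norm_tF[OF admissible neg desc_in_FS antidiagonal that])
    moreover have "n0 - int n - 1 = n0 - int (Suc n)"
      by simp
    ultimately show ?thesis
      by (simp add: diag_norm_scale)
  qed
  have "summable (diag_norm a1 a2 a (desc n) (n0 - int n))
      \<and> summable (diag_norm a1 a2 a (desc (Suc n)) (n0 - int (Suc n)))" for n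
  proof (induction n)
    case 0
    have "summable (diag_norm a1 a2 a (tE a1 a2 a (desc 0)) (n0 - int 0 + 1))"
      by (simp add: tE_u diag_norm_zero)
    then show ?case
      using summable_u summable_Suc[of 0] by simp
  next
    case (Suc n)
    have "n0 - int (Suc n) + 1 = n0 - int n"
      by simp
    then have "summable (diag_norm a1 a2 a (tE a1 a2 a (desc (Suc n))) (n0 - int (Suc n) + 1))"
      using Suc unfolding tE_desc diag_norm_scale by simp
    then show ?case
      using Suc summable_Suc by blast
  qed
  then show ?thesis
    using inV_iff_summable_diag_norm[OF admissible neg desc_in_FS antidiagonal] by blast
qed

lemma hilb_sub_if_descendants_inV:
  assumes "\<And>n. inV a1 a2 a (desc n)"
  shows "hilb_sub (of_real l) a1 a2 a"
  unfolding hilb_sub_def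
  using embedding_add embedding_scale embedding_actE embedding_actF embedding_actH inj_on_embedding
    embedding_in_FS embedding_inV[OF _ assms]
  by blast

end

lemma weight_of_real:
  assumes "admissible a1 a2"
  shows "a1 + of_real a - a2 + 2 * of_int n0 = complex_of_real (Re a1 - Re a2 + a + 2 * real_of_int n0)"
  using assms by (cases rule: admissibleE) (simp_all add: complex_eq_iff)

lemma hilb_sub_sufficient:
  assumes admissible: "admissible a1 a2" and neg: "a < 0" and n0_in_Kset: "n0 \<in> Kset a1 a2"
    and bound: "2 * real_of_int n0 + Re a1 - Re a2 + a < -1"
  shows "hilb_sub (a1 + of_real a - a2 + 2 * of_int n0) a1 a2 a"
proof -
  define l where "l = Re a1 - Re a2 + a + 2 * real_of_int n0"
  have lam: "a1 + of_real a - a2 + 2 * of_int n0 = complex_of_real l"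
    using weight_of_real[OF admissible, of a n0] unfolding l_def .
  then have weight: "a1 - a2 + of_real a + 2 * of_int n0 = complex_of_real l"
    by (simp add: algebra_simps)
  interpret highest_weight_vector a1 a2 a l "hw_vector a1 a2 a n0"
    using hw_vector_in_FS[OF admissible neg n0_in_Kset] tE_hw_vector[OF admissible neg n0_in_Kset]
      hw_vector_nonzero[OF admissible neg n0_in_Kset] tH_hw_vector[OF admissible neg n0_in_Kset, unfolded weight]
      bound by unfold_locales (auto simp: l_def)
  have "inV a1 a2 a (desc n)" for n
    using descendants_inV[OF admissible neg weight] summable_diag_norm_hw_vector_iff[OF admissible neg n0_in_Kset]
      bound by blast
  then have "hilb_sub (of_real l) a1 a2 a"
    by (rule hilb_sub_if_descendants_inV)
  then show ?thesis
    unfolding lam .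
qed

lemma hilb_sub_iff:
  assumes "admissible a1 a2" "a < 0"
  shows "hilb_sub (a1 + of_real a - a2 + 2 * of_int n0) a1 a2 a
     \<longleftrightarrow> n0 \<in> Kset a1 a2 \<and> 2 * real_of_int n0 + Re a1 - Re a2 + a < -1"
  using hilb_sub_necessary[OF assms] hilb_sub_sufficient[OF assms] by blast

theorem mainTheorem4:
  fixes a :: real and a1 a2 :: complex
  assumes "a < 0"
    and "(a1 = 0 \<and> Im a2 = 0 \<and> Re a2 < 0)
       \<or> (\<exists>x y. -1 \<le> x \<and> x < 0 \<and> y > 0 \<and> a1 = Complex (-1 - x) y \<and> a2 = Complex x y)
       \<or> (Im a1 = 0 \<and> Im a2 = 0 \<and> -1 < Re a1 \<and> Re a1 < 0 \<and> -1 < Re a2 \<and> Re a2 < 0)"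
  shows "(\<forall>lam. hilb_sub lam a1 a2 a \<longrightarrow>
            (\<exists>n0::int. lam = a1 + of_real a - a2 + 2 * of_int n0))
       \<and> (a1 = 0 \<longrightarrow> (\<forall>n0::int.
            hilb_sub (of_real a - a2 + 2 * of_int n0) a1 a2 a \<longleftrightarrow>
            (0 \<le> 2 * n0 \<and> real_of_int (2 * n0) < -1 - a + Re a2)))
       \<and> (a1 \<noteq> 0 \<longrightarrow> (\<forall>n0::int.
            hilb_sub (a1 + of_real a - a2 + 2 * of_int n0) a1 a2 a \<longleftrightarrow>
            real_of_int (2 * n0) < -1 - a - Re a1 + Re a2))"
proof -
  have admissible: "admissible a1 a2"
    using assms(2) unfolding admissible_def .
  note iff = hilb_sub_iff[OF admissible assms(1)] and K = Kset_admissible[OF admissible]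
  have "hilb_sub (of_real a - a2 + 2 * of_int n0) 0 a2 a \<longleftrightarrow>
      (0 \<le> 2 * n0 \<and> real_of_int (2 * n0) < -1 - a + Re a2)" if "a1 = 0" for n0
    using iff[of n0] K that by auto
  moreover have "hilb_sub (a1 + of_real a - a2 + 2 * of_int n0) a1 a2 a \<longleftrightarrow>
      real_of_int (2 * n0) < -1 - a - Re a1 + Re a2" if "a1 \<noteq> 0" for n0
    using iff[of n0] K that by auto
  ultimately show ?thesis
    using hilb_sub_weight by auto
qed

end
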